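(* Let $\varphi=\frac{1+\sqrt5}{2}$. (i) If $x\in[0,1]\setminus\mathbb{Q}$ and all partial quotients of the continued fraction expansion of $x$ are at most $2$, then $g'_{\varphi^{-1}}(x)=+\infty$. (ii) There exists $y\in[0,1]\setminus\mathbb{Q}$ all of whose partial quotients are at most $3$ such that $g'_{\varphi^{-1}}(y)=0$.
   Context: For irrational $x\in(0,1)$, $x=[0;a_1,a_2,\ldots]$ is its regular continued fraction with partial quotients $a_i$. For $\lambda\in(0,1)$ the Denjoy–Tichy–Uitz function $g_\lambda:[0,1]\to[0,1]$ is defined by $g_\lambda(0)=0$, $g_\lambda(1)=1$, and, whenever $g_\lambda$ is defined at two consecutive Farey fractions $\frac pq<\frac rs$, $g_\lambda\!\left(\frac{p+r}{q+s}\right)=(1-\lambda)g_\lambda\!\left(\frac pq\right)+\lambda g_\lambda\!\left(\frac rs\right)$, extended by continuity. For irrational $x$, $g_{\varphi^{-1}}(x)=\sum_{i\ge1}(-1)^{i-1}\varphi^{-(a_1+2a_2+a_3+2a_4+\cdots+c_ia_i-1)}$ where $c_i=1$ for odd $i$ and $c_i=2$ for even $i$. Derivatives are two-sided and may equal $+\infty$. *)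

theory Defs
  imports "HOL-Analysis.Analysis"
begin

text \<open>Gauss map and partial quotients: for x = [0; a_1, a_2, ...] irrational in (0,1),
  cf_pq x n = a_(n+1).\<close>
definition gauss_map :: "real \<Rightarrow> real" where
  "gauss_map x = frac (1 / x)"

definition cf_pq :: "real \<Rightarrow> nat \<Rightarrow> nat" where
  "cf_pq x n = nat \<lfloor>1 / ((gauss_map ^^ n) x)\<rfloor>"

text \<open>Consecutive Farey fractions p/q < r/s in [0,1] are exactly the pairs with
  r q - p s = 1 (and p \<ge> 0, q,s > 0, r \<le> s).  The Denjoy-Tichy-Uitz function is the
  unique continuous function on [0,1] with g 0 = 0, g 1 = 1 satisfying the mediant rule.
  Outside [0,1] it is set to 0 (irrelevant for the statement).\<close>
definition dtu_rule :: "real \<Rightarrow> (real \<Rightarrow> real) \<Rightarrow> bool" where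
  "dtu_rule lam f \<longleftrightarrow>
     continuous_on {0..1} f \<and> f 0 = 0 \<and> f 1 = 1 \<and>
     (\<forall>p q r s :: int. 0 \<le> p \<and> 0 < q \<and> 0 < s \<and> r \<le> s \<and> r * q - p * s = 1 \<longrightarrow>
        f (real_of_int (p + r) / real_of_int (q + s)) =
          (1 - lam) * f (real_of_int p / real_of_int q) + lam * f (real_of_int r / real_of_int s)) \<and>
     (\<forall>x. x \<notin> {0..1} \<longrightarrow> f x = 0)"

definition dtu :: "real \<Rightarrow> real \<Rightarrow> real" where
  "dtu lam = (THE f. dtu_rule lam f)"

end

theory Submission
  imports Defs
begin

(* Write g for the Denjoy-Tichy-Uitz function with parameter lambda. The mediant rule says that
   the two branches of the Farey map carry g to affine images of itself; g is therefore the
   fixed point of a contraction on monotone functions, and it is unique because the mediant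
   rule determines it on all rationals.

   Each inverse branch z -> 1/(a + z) of the Gauss map turns g_lambda into an affine image of
   g_(1 - lambda) with scale lambda^(a-1) (1 - lambda). Following the continued fraction of x,
   on the level-k cylinder of x (an interval of length about 1/q_k^2) g is an affine copy of
   g_lambda or g_(1 - lambda) with scale B_k, and points leaving that cylinder change g by at
   least a constant times B_k. Hence the difference quotients near x are bounded below by a
   constant times B_k q_k^2. For lambda = 1/phi one has 1 - lambda = lambda^2, and when all
   partial quotients are 1 or 2 the quantity B_k q_k^2 grows like (6/5)^(k/2): this is (i).

   For (ii), y = [0; 1, 3, 1, 3, ...] is the fixed point of u -> [0; 1, 3 + u], which contracts
   distances to y by a factor of at least 1/25, whereas g contracts by (1 - lambda)^3 lambda =
   lambda^7 < 1/25; so the difference quotients at y tend to 0. *)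

lemma geometric_increments_convergent:
  fixes s :: "nat \<Rightarrow> real"
  assumes inc: "\<And>n. \<bar>s (Suc n) - s n\<bar> \<le> m ^ n" and m: "0 \<le> m" "m < 1"
  shows "convergent s" and "\<bar>lim s - s n\<bar> \<le> m ^ n / (1 - m)"
proof -
  have "summable (\<lambda>i. s (Suc i) - s i)"
    by (rule summable_comparison_test'[OF summable_geometric[of m], where N = 0]) (use inc m in auto)
  then have "convergent (\<lambda>n. s 0 + (\<Sum>i<n. s (Suc i) - s i))"
    by (simp add: summable_iff_convergent convergent_add_const_iff)
  then show conv: "convergent s"
    by (simp add: sum_lessThan_telescope)
  have tail: "\<bar>s (n + k) - s n\<bar> \<le> (m ^ n - m ^ (n + k)) / (1 - m)" for k
  proof (induction k)
    case (Suc k)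
    have "\<bar>s (n + Suc k) - s n\<bar> \<le> \<bar>s (n + k) - s n\<bar> + m ^ (n + k)"
      using inc[of "n + k"] by simp
    also have "\<dots> \<le> (m ^ n - m ^ (n + Suc k)) / (1 - m)"
      using Suc m by (simp add: field_simps)
    finally show ?case .
  qed simp
  have "(m ^ n - m ^ (n + k)) / (1 - m) \<le> m ^ n / (1 - m)" for k
    using m by (intro divide_right_mono) auto
  then have "\<bar>s (n + k) - s n\<bar> \<le> m ^ n / (1 - m)" for k
    using tail[of k] by (rule order_trans[rotated])
  moreover have "(\<lambda>k. \<bar>s (n + k) - s n\<bar>) \<longlonglongrightarrow> \<bar>lim s - s n\<bar>"
    using conv LIMSEQ_ignore_initial_segment[of s "lim s" n]
    by (intro tendsto_intros) (simp_all add: convergent_LIMSEQ_iff add.commute)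
  ultimately show "\<bar>lim s - s n\<bar> \<le> m ^ n / (1 - m)"
    by (intro LIMSEQ_le_const2) auto
qed

definition unit_cdf :: "(real \<Rightarrow> real) \<Rightarrow> bool" where
  "unit_cdf f \<longleftrightarrow> f 0 = 0 \<and> f 1 = 1 \<and> mono_on {0..1} f \<and> continuous_on {0..1} f"

lemma unit_cdf_range: "unit_cdf f \<Longrightarrow> x \<in> {0..1} \<Longrightarrow> f x \<in> {0..1}"
  unfolding unit_cdf_def by (metis atLeastAtMost_iff mono_onD order_refl zero_le_one)

lemma farey_left_branch_in_unit: "0 \<le> x \<Longrightarrow> x \<le> 1/2 \<Longrightarrow> x / (1 - x) \<in> {0..(1::real)}"
  by (auto simp: field_simps)

lemma farey_right_branch_in_unit: "1/2 \<le> x \<Longrightarrow> x \<le> 1 \<Longrightarrow> 2 - 1 / x \<in> {0..(1::real)}"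
  by (auto simp: field_simps)

text \<open>The two branches of the Farey map, \<open>x/(1-x)\<close> on \<open>[0,1/2]\<close> and \<open>2-1/x\<close> on
  \<open>[1/2,1]\<close>, map consecutive Farey fractions to consecutive Farey fractions; \<open>g\<^sub>\<lambda>\<close> is the
  fixed point of the operator they induce.\<close>

definition dtu_step :: "real \<Rightarrow> (real \<Rightarrow> real) \<Rightarrow> real \<Rightarrow> real" where
  "dtu_step v f x = (if x \<le> 1/2 then v * f (x / (1 - x)) else v + (1 - v) * f (2 - 1 / x))"

lemma mono_on_dtu_step:
  assumes v: "0 \<le> v" "v \<le> 1" and f: "unit_cdf f"
  shows "mono_on {0..1} (dtu_step v f)"
proof (rule mono_onI)
  have mono: "mono_on {0..1} f" using f by (simp add: unit_cdf_def)
  fix x y :: real assume xy: "x \<in> {0..1}" "y \<in> {0..1}" "x \<le> y"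
  show "dtu_step v f x \<le> dtu_step v f y"
  proof (cases "y \<le> 1/2")
    case True
    then have "f (x / (1 - x)) \<le> f (y / (1 - y))"
      using xy farey_left_branch_in_unit[of x] farey_left_branch_in_unit[of y]
      by (intro mono_onD[OF mono]) (auto simp: field_simps)
    then show ?thesis using True xy v by (auto simp: dtu_step_def intro: mult_left_mono)
  next
    case y: False
    show ?thesis
    proof (cases "x \<le> 1/2")
      case True
      have "f (x / (1 - x)) \<in> {0..1}" "f (2 - 1 / y) \<in> {0..1}"
        using unit_cdf_range[OF f farey_left_branch_in_unit] unit_cdf_range[OF f farey_right_branch_in_unit]
          True xy y by auto
      then have "v * f (x / (1 - x)) \<le> v" "0 \<le> (1 - v) * f (2 - 1 / y)"
        using v by (auto intro: mult_left_le)
      then show ?thesis using True y by (simp add: dtu_step_def)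
    next
      case False
      then have "f (2 - 1 / x) \<le> f (2 - 1 / y)"
        using xy y farey_right_branch_in_unit[of x] farey_right_branch_in_unit[of y]
        by (intro mono_onD[OF mono]) (auto simp: field_simps)
      then show ?thesis using False y v by (auto simp: dtu_step_def intro: mult_left_mono)
    qed
  qed
qed

lemma continuous_on_dtu_step:
  assumes f: "unit_cdf f"
  shows "continuous_on {0..1} (dtu_step v f)"
proof -
  have f0: "f 0 = 0" and f1: "f 1 = 1" and cont: "continuous_on {0..1} f"
    using f by (auto simp: unit_cdf_def)
  have "continuous_on {0..1/2} (\<lambda>x. v * f (x / (1 - x)))"
    using farey_left_branch_in_unit
    by (intro continuous_intros continuous_on_compose2[OF cont]) auto
  moreover have "continuous_on {1/2..1} (\<lambda>x. v + (1 - v) * f (2 - 1 / x))"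
    using farey_right_branch_in_unit
    by (intro continuous_intros continuous_on_compose2[OF cont]) auto
  moreover have "v * f (x / (1 - x)) = v + (1 - v) * f (2 - 1 / x)"
    if "(x \<in> {0..1/2} \<and> \<not> x \<le> 1/2) \<or> (x \<in> {1/2..1} \<and> x \<le> 1/2)" for x
  proof -
    from that have "x = 1/2" by auto
    then have "x / (1 - x) = 1" "2 - 1 / x = 0" by (simp_all add: field_simps)
    then show ?thesis by (simp only: f0 f1)
  qed
  ultimately have "continuous_on ({0..1/2} \<union> {1/2..1})
      (\<lambda>x. if x \<le> 1/2 then v * f (x / (1 - x)) else v + (1 - v) * f (2 - 1 / x))"
    by (intro continuous_on_cases) auto
  moreover have "{0..1/2} \<union> {1/2..1} = {0..1::real}" by auto
  ultimately show ?thesis by (simp add: dtu_step_def[abs_def])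
qed

lemma unit_cdf_dtu_step: "0 \<le> v \<Longrightarrow> v \<le> 1 \<Longrightarrow> unit_cdf f \<Longrightarrow> unit_cdf (dtu_step v f)"
  using mono_on_dtu_step continuous_on_dtu_step by (simp add: unit_cdf_def dtu_step_def)

lemma dtu_step_contraction:
  assumes v: "0 \<le> v" "v \<le> 1" and x: "x \<in> {0..1}" and fg: "\<And>u. u \<in> {0..1} \<Longrightarrow> \<bar>f u - g u\<bar> \<le> e"
  shows "\<bar>dtu_step v f x - dtu_step v g x\<bar> \<le> max v (1 - v) * e"
proof (cases "x \<le> 1/2")
  case True
  have "\<bar>dtu_step v f x - dtu_step v g x\<bar> = v * \<bar>f (x / (1 - x)) - g (x / (1 - x))\<bar>"
    using True v by (simp add: dtu_step_def abs_mult flip: right_diff_distrib)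
  also have "\<dots> \<le> max v (1 - v) * e"
    using fg[OF farey_left_branch_in_unit] True x v by (intro mult_mono) auto
  finally show ?thesis .
next
  case False
  have "\<bar>dtu_step v f x - dtu_step v g x\<bar> = (1 - v) * \<bar>f (2 - 1 / x) - g (2 - 1 / x)\<bar>"
    using False v by (simp add: dtu_step_def abs_mult flip: right_diff_distrib)
  also have "\<dots> \<le> max v (1 - v) * e"
    using fg[OF farey_right_branch_in_unit] False x v by (intro mult_mono) auto
  finally show ?thesis .
qed

definition dtu_iter :: "real \<Rightarrow> nat \<Rightarrow> real \<Rightarrow> real" where
  "dtu_iter v n = (dtu_step v ^^ n) (\<lambda>x. x)"

lemma dtu_iter_Suc: "dtu_iter v (Suc n) = dtu_step v (dtu_iter v n)"
  by (simp add: dtu_iter_def)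

lemma unit_cdf_dtu_iter: "0 \<le> v \<Longrightarrow> v \<le> 1 \<Longrightarrow> unit_cdf (dtu_iter v n)"
  by (induction n) (auto simp: dtu_iter_Suc unit_cdf_dtu_step,
                    auto simp: dtu_iter_def unit_cdf_def mono_on_def)

lemma dtu_iter_increment:
  assumes v: "0 \<le> v" "v \<le> 1" and x: "x \<in> {0..1}"
  shows "\<bar>dtu_iter v (Suc n) x - dtu_iter v n x\<bar> \<le> max v (1 - v) ^ n"
  using x
proof (induction n arbitrary: x)
  case 0
  have "dtu_iter v k x \<in> {0..1}" for k
    using unit_cdf_range[OF unit_cdf_dtu_iter[OF v] 0] .
  from this[of 0] this[of 1] show ?case by (auto simp: abs_le_iff)
next
  case (Suc n)
  have IH: "\<And>u. u \<in> {0..1} \<Longrightarrow> \<bar>dtu_step v (dtu_iter v n) u - dtu_iter v n u\<bar> \<le> max v (1 - v) ^ n"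
    using Suc.IH by (simp add: dtu_iter_Suc)
  show ?case
    unfolding dtu_iter_Suc power_Suc by (rule dtu_step_contraction[OF v Suc.prems IH])
qed

definition dtu_limit :: "real \<Rightarrow> real \<Rightarrow> real" where
  "dtu_limit v x = (if x \<in> {0..1} then lim (\<lambda>n. dtu_iter v n x) else 0)"

context
  fixes v :: real
  assumes v: "0 < v" "v < 1"
begin

lemma dtu_iter_approx:
  assumes x: "x \<in> {0..1}"
  shows "(\<lambda>n. dtu_iter v n x) \<longlonglongrightarrow> dtu_limit v x"
    and "\<bar>dtu_limit v x - dtu_iter v n x\<bar> \<le> max v (1 - v) ^ n / (1 - max v (1 - v))"
proof -
  have inc: "\<And>n. \<bar>dtu_iter v (Suc n) x - dtu_iter v n x\<bar> \<le> max v (1 - v) ^ n"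
    using dtu_iter_increment v x by simp
  have m: "0 \<le> max v (1 - v)" "max v (1 - v) < 1" using v by auto
  show "(\<lambda>n. dtu_iter v n x) \<longlonglongrightarrow> dtu_limit v x"
    using geometric_increments_convergent(1)[OF inc m] x
    by (simp add: dtu_limit_def convergent_LIMSEQ_iff)
  show "\<bar>dtu_limit v x - dtu_iter v n x\<bar> \<le> max v (1 - v) ^ n / (1 - max v (1 - v))"
    using geometric_increments_convergent(2)[OF inc m] x by (simp add: dtu_limit_def)
qed

lemma dtu_iter_uniform_limit: "uniform_limit {0..1} (dtu_iter v) (dtu_limit v) sequentially"
proof (rule uniform_limitI)
  fix e :: real assume "0 < e"
  let ?m = "max v (1 - v)"
  have "(\<lambda>n. ?m ^ n / (1 - ?m)) \<longlonglongrightarrow> 0 / (1 - ?m)"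
    using v by (intro tendsto_divide LIMSEQ_power_zero tendsto_const) auto
  then have "\<forall>\<^sub>F n in sequentially. ?m ^ n / (1 - ?m) < e"
    using \<open>0 < e\<close> by (auto dest: order_tendstoD(2))
  then show "\<forall>\<^sub>F n in sequentially. \<forall>x\<in>{0..1}. dist (dtu_iter v n x) (dtu_limit v x) < e"
  proof (rule eventually_mono)
    fix n assume "?m ^ n / (1 - ?m) < e"
    then show "\<forall>x\<in>{0..1}. dist (dtu_iter v n x) (dtu_limit v x) < e"
      using dtu_iter_approx(2)[of _ n] by (force simp: dist_real_def abs_minus_commute)
  qed
qed

lemma unit_cdf_dtu_limit: "unit_cdf (dtu_limit v)"
proof -
  have iter: "\<And>n. unit_cdf (dtu_iter v n)" using unit_cdf_dtu_iter v by simp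
  have "dtu_limit v 0 = 0" "dtu_limit v 1 = 1"
    using LIMSEQ_unique[OF dtu_iter_approx(1)] iter by (auto simp: unit_cdf_def)
  moreover have "mono_on {0..1} (dtu_limit v)"
  proof (rule mono_onI)
    fix x y :: real assume xy: "x \<in> {0..1}" "y \<in> {0..1}" "x \<le> y"
    show "dtu_limit v x \<le> dtu_limit v y"
      by (rule LIMSEQ_le[OF dtu_iter_approx(1) dtu_iter_approx(1)])
         (use xy iter in \<open>auto simp: unit_cdf_def mono_on_def\<close>)
  qed
  moreover have "continuous_on {0..1} (dtu_limit v)"
    using iter by (intro uniform_limit_theorem[OF _ dtu_iter_uniform_limit]) (auto simp: unit_cdf_def)
  ultimately show ?thesis by (simp add: unit_cdf_def)
qed

lemma dtu_limit_fixpoint: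
  assumes x: "x \<in> {0..1}"
  shows "dtu_step v (dtu_limit v) x = dtu_limit v x"
proof -
  have "(\<lambda>n. dtu_step v (dtu_iter v n) x) \<longlonglongrightarrow> dtu_step v (dtu_limit v) x"
    unfolding dtu_step_def using x farey_left_branch_in_unit farey_right_branch_in_unit
    by (auto intro!: tendsto_intros dtu_iter_approx(1))
  moreover have "(\<lambda>n. dtu_step v (dtu_iter v n) x) \<longlonglongrightarrow> dtu_limit v x"
    using LIMSEQ_Suc[OF dtu_iter_approx(1)[OF x]] by (simp add: dtu_iter_Suc)
  ultimately show ?thesis by (rule LIMSEQ_unique)
qed

end

definition farey_pair :: "int \<Rightarrow> int \<Rightarrow> int \<Rightarrow> int \<Rightarrow> bool" where
  "farey_pair p q r s \<longleftrightarrow> 0 \<le> p \<and> 0 < q \<and> 0 < s \<and> r \<le> s \<and> r * q - p * s = 1"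

lemma dtu_rule_iff:
  "dtu_rule v f \<longleftrightarrow>
     continuous_on {0..1} f \<and> f 0 = 0 \<and> f 1 = 1 \<and>
     (\<forall>p q r s. farey_pair p q r s \<longrightarrow>
        f (of_int (p + r) / of_int (q + s)) = (1 - v) * f (of_int p / of_int q) + v * f (of_int r / of_int s)) \<and>
     (\<forall>x. x \<notin> {0..1} \<longrightarrow> f x = 0)"
  unfolding dtu_rule_def farey_pair_def by blast

lemma farey_pair_bounds:
  assumes "farey_pair p q r s"
  shows "0 < r" "p < q"
proof -
  have p: "0 \<le> p" and q: "0 < q" and s: "0 < s" and rs: "r \<le> s" and det: "r * q - p * s = 1"
    using assms by (auto simp: farey_pair_def)
  have "0 \<le> p * s" using p s by simp
  then have "0 < r * q" using det by linarith
  then show "0 < r" using q by (simp add: zero_less_mult_iff)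
  have "r * q \<le> s * q" using rs q by (simp add: mult_right_mono)
  then have "p * s < q * s" using det by (simp add: algebra_simps)
  then show "p < q" using s by simp
qed

lemma farey_pair_coprime:
  assumes "farey_pair p q r s"
  shows "coprime p q" "coprime r s"
proof -
  have det: "r * q - p * s = 1" using assms by (simp add: farey_pair_def)
  show "coprime p q" "coprime r s"
    by (auto intro!: coprimeI simp flip: det)
qed

lemma farey_pair_left_branch:
  assumes "farey_pair p q r s" "2 * r \<le> s"
  shows "farey_pair p (q - p) r (s - r)" "2 * p < q"
proof -
  have "0 < r" "p < q" using farey_pair_bounds[OF assms(1)] by auto
  then show "farey_pair p (q - p) r (s - r)"
    using assms by (auto simp: farey_pair_def algebra_simps)
  have q: "0 < q" and s: "0 < s" and det: "r * q - p * s = 1"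
    using assms(1) by (auto simp: farey_pair_def)
  have "2 * r * q \<le> s * q" using assms(2) q by (intro mult_right_mono) auto
  then have "(2 * p) * s < q * s" using det by (simp add: algebra_simps)
  then show "2 * p < q" using s by simp
qed

lemma farey_pair_right_branch:
  assumes "farey_pair p q r s" "q \<le> 2 * p"
  shows "farey_pair (2 * p - q) p (2 * r - s) r" "s < 2 * r"
proof -
  have "0 < r" "p < q" using farey_pair_bounds[OF assms(1)] by auto
  then show "farey_pair (2 * p - q) p (2 * r - s) r"
    using assms by (auto simp: farey_pair_def algebra_simps)
  have q: "0 < q" and s: "0 < s" and det: "r * q - p * s = 1"
    using assms(1) by (auto simp: farey_pair_def)
  have "q * s \<le> 2 * p * s" using assms(2) s by (intro mult_right_mono) auto
  then have "s * q < (2 * r) * q" using det by (simp add: algebra_simps)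
  then show "s < 2 * r" using q by simp
qed

lemma farey_pair_root:
  assumes "farey_pair p q r s" "s < 2 * r" "2 * p < q"
  shows "p = 0" "q = 1" "r = 1" "s = 1"
proof -
  have q: "0 < q" and s: "0 < s" and det: "r * q - p * s = 1"
    using assms(1) by (auto simp: farey_pair_def)
  have "(s + 1) * q \<le> 2 * r * q" "2 * p * s \<le> (q - 1) * s"
    using assms q s by (intro mult_right_mono; simp)+
  then have "q + s \<le> 2" using det by (simp add: algebra_simps)
  then show "q = 1" "s = 1" using q s by auto
  then show "p = 0" "r = 1" using assms det by auto
qed

lemma farey_pair_parents:
  fixes a b :: int
  assumes "coprime a b" "0 < a" "a < b"
  obtains p q r s where "farey_pair p q r s" "a = p + r" "b = q + s"
proof -
  obtain u w where uw: "u * a + w * b = 1"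
    using bezout_int[of a b] assms(1) by auto
  define q where "q = u mod b"
  have q: "0 \<le> q" "q < b" using assms by (simp_all add: q_def)
  have "(a * q) mod b = (a * u) mod b"
    by (simp add: q_def mod_mult_right_eq)
  also have "a * u = 1 - w * b" using uw by (simp add: algebra_simps)
  also have "(1 - w * b) mod b = 1 mod b" by (simp add: mod_diff_eq[symmetric])
  also have "\<dots> = 1" using assms by simp
  finally have aq: "(a * q) mod b = 1" .
  define p where "p = (a * q) div b"
  have apq: "a * q = p * b + 1"
    using aq div_mult_mod_eq[of "a * q" b] by (simp add: p_def algebra_simps)
  have "q \<noteq> 0" using aq by auto
  have "farey_pair p q (a - p) (b - q)"
    unfolding farey_pair_def
  proof (intro conjI)
    show "0 \<le> p" unfolding p_def using assms q by (simp add: pos_imp_zdiv_nonneg_iff)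
    show "0 < q" using q \<open>q \<noteq> 0\<close> by simp
    show "0 < b - q" using q by simp
    show det: "(a - p) * q - p * (b - q) = 1" using apq by (simp add: algebra_simps)
    have "a * q \<le> b * q" using assms q by (intro mult_right_mono) auto
    then have "p * b < q * b" using apq by (simp add: algebra_simps)
    then have "p < q" using assms by (simp add: mult_less_cancel_right)
    then have "p * (b - q) \<le> (q - 1) * (b - q)" using q by (intro mult_right_mono) auto
    then have "(a - p) * q \<le> (b - q) * q" using det q by (simp add: algebra_simps)
    then show "a - p \<le> b - q" using q \<open>q \<noteq> 0\<close> by (simp add: mult_le_cancel_right)
  qed
  then show ?thesis using that by fastforce
qed

lemma left_branch_at_fraction:
  fixes f :: "real \<Rightarrow> real" and a b :: int
  assumes left: "\<And>x. 0 \<le> x \<Longrightarrow> x \<le> 1/2 \<Longrightarrow> f x = v * f (x / (1 - x))"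
    and "0 \<le> a" "2 * a \<le> b" "0 < b"
  shows "f (of_int a / of_int b) = v * f (of_int a / of_int (b - a))"
proof -
  have x: "(0 :: real) \<le> of_int a / of_int b" "of_int a / of_int b \<le> (1/2 :: real)"
    using assms(2-) by (simp_all add: field_simps)
  have "(of_int a / of_int b) / (1 - of_int a / of_int b) = (of_int a / of_int (b - a) :: real)"
    using assms(2-) by (simp add: field_simps)
  from left[OF x, unfolded this] show ?thesis .
qed

lemma right_branch_at_fraction:
  fixes f :: "real \<Rightarrow> real" and a b :: int
  assumes right: "\<And>x. 1/2 \<le> x \<Longrightarrow> x \<le> 1 \<Longrightarrow> f x = v + (1 - v) * f (2 - 1 / x)"
    and "0 < a" "b \<le> 2 * a" "a \<le> b"
  shows "f (of_int a / of_int b) = v + (1 - v) * f (of_int (2 * a - b) / of_int a)"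
proof -
  have x: "1/2 \<le> (of_int a / of_int b :: real)" "of_int a / of_int b \<le> (1 :: real)"
    using assms(2-) by (simp_all add: field_simps)
  have "2 - 1 / (of_int a / of_int b) = (of_int (2 * a - b) / of_int a :: real)"
    using assms(2-) by (simp add: field_simps)
  from right[OF x, unfolded this] show ?thesis .
qed

lemma mediant_rule_if_branch_equations:
  fixes f :: "real \<Rightarrow> real"
  assumes f0: "f 0 = 0" and f1: "f 1 = 1"
    and left: "\<And>x. 0 \<le> x \<Longrightarrow> x \<le> 1/2 \<Longrightarrow> f x = v * f (x / (1 - x))"
    and right: "\<And>x. 1/2 \<le> x \<Longrightarrow> x \<le> 1 \<Longrightarrow> f x = v + (1 - v) * f (2 - 1 / x)"
    and "farey_pair p q r s"
  shows "f (of_int (p + r) / of_int (q + s)) = (1 - v) * f (of_int p / of_int q) + v * f (of_int r / of_int s)"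
  using \<open>farey_pair p q r s\<close>
proof (induction "nat (q + s)" arbitrary: p q r s rule: less_induct)
  case less
  note L = left_branch_at_fraction[of f v, OF left]
  note R = right_branch_at_fraction[of f v, OF right]
  have r: "0 < r" and pq: "p < q" using farey_pair_bounds[OF less.prems] by auto
  have p: "0 \<le> p" and s: "0 < s" and rs: "r \<le> s" using less.prems by (auto simp: farey_pair_def)
  consider (below_half) "2 * r \<le> s" | (above_half) "q \<le> 2 * p" | (root) "s < 2 * r" "2 * p < q"
    by linarith
  then show ?case
  proof cases
    case below_half
    note fp = farey_pair_left_branch[OF less.prems below_half]
    have IH: "f (of_int (p + r) / of_int (q + s - (p + r))) =
        (1 - v) * f (of_int p / of_int (q - p)) + v * f (of_int r / of_int (s - r))"
      using less.hyps[OF _ fp(1)] r p pq s by (simp add: algebra_simps)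
    have Lp: "f (of_int p / of_int q) = v * f (of_int p / of_int (q - p))"
      by (rule L) (use p fp(2) pq in auto)
    have Lr: "f (of_int r / of_int s) = v * f (of_int r / of_int (s - r))"
      by (rule L) (use r below_half s in auto)
    have "f (of_int (p + r) / of_int (q + s)) = v * f (of_int (p + r) / of_int (q + s - (p + r)))"
      by (rule L) (use p r s pq below_half fp(2) in auto)
    also have "\<dots> = (1 - v) * (v * f (of_int p / of_int (q - p))) + v * (v * f (of_int r / of_int (s - r)))"
      unfolding IH by (simp add: algebra_simps)
    finally show ?thesis by (simp only: Lp Lr)
  next
    case above_half
    note fp = farey_pair_right_branch[OF less.prems above_half]
    have IH: "f (of_int (2 * (p + r) - (q + s)) / of_int (p + r)) =
        (1 - v) * f (of_int (2 * p - q) / of_int p) + v * f (of_int (2 * r - s) / of_int r)"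
      using less.hyps[OF _ fp(1)] r p rs pq by (simp add: algebra_simps)
    have Rp: "f (of_int p / of_int q) = v + (1 - v) * f (of_int (2 * p - q) / of_int p)"
      by (rule R) (use above_half pq in auto)
    have Rr: "f (of_int r / of_int s) = v + (1 - v) * f (of_int (2 * r - s) / of_int r)"
      by (rule R) (use r rs fp(2) in auto)
    have "f (of_int (p + r) / of_int (q + s)) = v + (1 - v) * f (of_int (2 * (p + r) - (q + s)) / of_int (p + r))"
      by (rule R) (use p r rs pq above_half fp(2) in auto)
    also have "\<dots> = (1 - v) * (v + (1 - v) * f (of_int (2 * p - q) / of_int p))
        + v * (v + (1 - v) * f (of_int (2 * r - s) / of_int r))"
      unfolding IH by (simp add: algebra_simps)
    finally show ?thesis by (simp only: Rp Rr)
  next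
    case root
    then show ?thesis
      using farey_pair_root[OF less.prems root] left[of "1/2"] f0 f1 by simp
  qed
qed

context
  fixes v :: real
  assumes v: "0 < v" "v < 1"
begin

lemma dtu_limit_left: "0 \<le> x \<Longrightarrow> x \<le> 1/2 \<Longrightarrow> dtu_limit v x = v * dtu_limit v (x / (1 - x))"
  using dtu_limit_fixpoint[OF v, of x] by (simp add: dtu_step_def)

lemma dtu_limit_right:
  assumes "1/2 \<le> x" "x \<le> 1"
  shows "dtu_limit v x = v + (1 - v) * dtu_limit v (2 - 1 / x)"
proof (cases "x = 1/2")
  case True
  have e: "x / (1 - x) = 1" "2 - 1 / x = 0" using True by (simp_all add: field_simps)
  have "dtu_limit v x = v * dtu_limit v (x / (1 - x))"
    by (rule dtu_limit_left) (use True in linarith)+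
  also have "\<dots> = v + (1 - v) * dtu_limit v (2 - 1 / x)"
    unfolding e using unit_cdf_dtu_limit[OF v] by (simp add: unit_cdf_def)
  finally show ?thesis .
next
  case False
  then show ?thesis using dtu_limit_fixpoint[OF v, of x] assms by (simp add: dtu_step_def)
qed

lemma dtu_rule_dtu_limit: "dtu_rule v (dtu_limit v)"
proof -
  have cdf: "unit_cdf (dtu_limit v)" by (rule unit_cdf_dtu_limit[OF v])
  have "dtu_limit v (of_int (p + r) / of_int (q + s)) =
      (1 - v) * dtu_limit v (of_int p / of_int q) + v * dtu_limit v (of_int r / of_int s)"
    if "farey_pair p q r s" for p q r s
    using cdf by (intro mediant_rule_if_branch_equations[OF _ _ dtu_limit_left dtu_limit_right that])
                 (auto simp: unit_cdf_def)
  then show ?thesis using cdf by (simp add: dtu_rule_iff unit_cdf_def dtu_limit_def)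
qed

end

lemma dtu_rule_eq_on_reduced_fractions:
  assumes f: "dtu_rule v f" and g: "dtu_rule v g"
    and ab: "coprime a b" "0 \<le> a" "a \<le> b" "0 < b"
  shows "f (of_int a / of_int b) = g (of_int a / of_int b)"
  using ab
proof (induction "nat b" arbitrary: a b rule: less_induct)
  case less
  consider "a = 0" | "a = b" | "0 < a" "a < b" using less.prems by linarith
  then show ?case
  proof cases
    case 1
    then show ?thesis using f g by (simp add: dtu_rule_def)
  next
    case 2
    then have "b = 1" using less.prems by simp
    then show ?thesis using 2 f g by (simp add: dtu_rule_def)
  next
    case 3
    then obtain p q r s where fp: "farey_pair p q r s" "a = p + r" "b = q + s"
      using farey_pair_parents less.prems(1) by blast
    have "0 < r" "p < q" using farey_pair_bounds[OF fp(1)] by auto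
    moreover have "0 \<le> p" "0 < s" "r \<le> s" using fp(1) by (auto simp: farey_pair_def)
    ultimately have "f (of_int p / of_int q) = g (of_int p / of_int q)"
      "f (of_int r / of_int s) = g (of_int r / of_int s)"
      using less.hyps[OF _ farey_pair_coprime(1)[OF fp(1)]] less.hyps[OF _ farey_pair_coprime(2)[OF fp(1)]]
        fp(3) by simp_all
    moreover have "f (of_int (p + r) / of_int (q + s)) = (1 - v) * f (of_int p / of_int q) + v * f (of_int r / of_int s)"
      "g (of_int (p + r) / of_int (q + s)) = (1 - v) * g (of_int p / of_int q) + v * g (of_int r / of_int s)"
      using f g fp(1) by (simp_all add: dtu_rule_iff)
    ultimately show ?thesis using fp(2,3) by simp
  qed
qed

lemma dtu_rule_eq_on_fractions:
  assumes f: "dtu_rule v f" and g: "dtu_rule v g" and ab: "0 \<le> a" "a \<le> b" "0 < b"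
  shows "f (of_int a / of_int b) = g (of_int a / of_int b)"
proof -
  define d where "d = gcd a b"
  have d: "0 < d" "a = d * (a div d)" "b = d * (b div d)"
    using ab by (simp_all add: d_def)
  have "0 \<le> a div d" "a div d \<le> b div d" "0 < b div d"
    using ab d(1) by (simp_all add: pos_imp_zdiv_nonneg_iff zdiv_mono1 pos_imp_zdiv_pos_iff d_def zdvd_imp_le)
  moreover have "coprime (a div d) (b div d)" using ab by (simp add: d_def div_gcd_coprime)
  ultimately have "f (of_int (a div d) / of_int (b div d)) = g (of_int (a div d) / of_int (b div d))"
    by (intro dtu_rule_eq_on_reduced_fractions[OF f g])
  moreover have "of_int a / of_int b = (of_int (d * (a div d)) / of_int (d * (b div d)) :: real)"
    by (simp only: d(2,3)[symmetric])
  moreover have "\<dots> = of_int (a div d) / of_int (b div d)"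
    using d(1) by simp
  ultimately show ?thesis by simp
qed

lemma floor_mult_div_tendsto: "(\<lambda>n. of_int \<lfloor>real (Suc n) * x\<rfloor> / real (Suc n)) \<longlonglongrightarrow> x"
proof (rule tendsto_sandwich[of "\<lambda>n. x - 1 / real (Suc n)" _ _ "\<lambda>n. x"])
  have lo: "real (Suc n) * x - 1 \<le> of_int \<lfloor>real (Suc n) * x\<rfloor>"
    and hi: "of_int \<lfloor>real (Suc n) * x\<rfloor> \<le> x * real (Suc n)" for n
    using of_int_floor_le[of "real (Suc n) * x"] by (linarith, simp add: mult.commute)
  have "x - 1 / real (Suc n) \<le> of_int \<lfloor>real (Suc n) * x\<rfloor> / real (Suc n)" for n
  proof -
    have "x - 1 / real (Suc n) = (real (Suc n) * x - 1) / real (Suc n)"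
      by (simp add: diff_divide_distrib del: of_nat_Suc)
    also have "\<dots> \<le> of_int \<lfloor>real (Suc n) * x\<rfloor> / real (Suc n)"
      using lo by (intro divide_right_mono) auto
    finally show ?thesis .
  qed
  moreover have "of_int \<lfloor>real (Suc n) * x\<rfloor> / real (Suc n) \<le> x" for n
    using hi by (simp add: pos_divide_le_eq del: of_nat_Suc)
  ultimately show "\<forall>\<^sub>F n in sequentially. x - 1 / real (Suc n) \<le> of_int \<lfloor>real (Suc n) * x\<rfloor> / real (Suc n)"
    "\<forall>\<^sub>F n in sequentially. of_int \<lfloor>real (Suc n) * x\<rfloor> / real (Suc n) \<le> x"
    by simp_all
  have "(\<lambda>n. 1 / real (Suc n)) \<longlonglongrightarrow> 0"
    using LIMSEQ_Suc[OF lim_const_over_n[of 1]] by simp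
  then show "(\<lambda>n. x - 1 / real (Suc n)) \<longlonglongrightarrow> x"
    using tendsto_diff[OF tendsto_const, of _ 0 _ x] by simp
qed simp

lemma eq_on_unit_interval_if_eq_on_fractions:
  fixes f g :: "real \<Rightarrow> real"
  assumes f: "continuous_on {0..1} f" and g: "continuous_on {0..1} g"
    and eq: "\<And>a b. 0 \<le> a \<Longrightarrow> a \<le> b \<Longrightarrow> 0 < b \<Longrightarrow> f (of_int a / of_int b) = g (of_int a / of_int b)"
    and x: "x \<in> {0..1}"
  shows "f x = g x"
proof -
  define c where "c n = of_int \<lfloor>real (Suc n) * x\<rfloor> / real (Suc n)" for n
  have c: "c n \<in> {0..1}" "f (c n) = g (c n)" for n
  proof -
    have "real (Suc n) * x \<le> real (Suc n)" using x by (intro mult_left_le) auto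
    then have "\<lfloor>real (Suc n) * x\<rfloor> \<le> int (Suc n)"
      by (metis floor_mono floor_of_nat)
    moreover have "0 \<le> \<lfloor>real (Suc n) * x\<rfloor>" using x by simp
    ultimately show "c n \<in> {0..1}" "f (c n) = g (c n)"
      using eq[of "\<lfloor>real (Suc n) * x\<rfloor>" "int (Suc n)"] by (auto simp: c_def field_simps)
  qed
  have "c \<longlonglongrightarrow> x"
    unfolding c_def by (rule floor_mult_div_tendsto)
  moreover have "\<forall>\<^sub>F n in sequentially. c n \<in> {0..1}" using c(1) by simp
  ultimately have "(\<lambda>n. f (c n)) \<longlonglongrightarrow> f x" "(\<lambda>n. g (c n)) \<longlonglongrightarrow> g x"
    using continuous_on_tendsto_compose[OF f _ x] continuous_on_tendsto_compose[OF g _ x] by auto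
  then show ?thesis using c(2) LIMSEQ_unique by simp
qed

lemma dtu_rule_unique:
  assumes f: "dtu_rule v f" and g: "dtu_rule v g"
  shows "f = g"
proof
  fix x
  show "f x = g x"
  proof (cases "x \<in> {0..1}")
    case True
    show ?thesis
      using eq_on_unit_interval_if_eq_on_fractions[of f g x] dtu_rule_eq_on_fractions[OF f g] True f g
      by (simp add: dtu_rule_def)
  next
    case False
    then show ?thesis using f g by (simp add: dtu_rule_def)
  qed
qed

theorem dtu_eq_dtu_limit: "0 < v \<Longrightarrow> v < 1 \<Longrightarrow> dtu v = dtu_limit v"
  unfolding dtu_def using dtu_rule_dtu_limit dtu_rule_unique by blast

context
  fixes v :: real
  assumes v: "0 < v" "v < 1"
begin

lemma dtu_rule_dtu: "dtu_rule v (dtu v)"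
  using dtu_eq_dtu_limit dtu_rule_dtu_limit v by simp

lemma unit_cdf_dtu: "unit_cdf (dtu v)"
  using dtu_eq_dtu_limit unit_cdf_dtu_limit v by simp

lemma dtu_0: "dtu v 0 = 0" and dtu_1: "dtu v 1 = 1"
  using unit_cdf_dtu by (simp_all add: unit_cdf_def)

lemma continuous_on_dtu: "continuous_on {0..1} (dtu v)"
  using unit_cdf_dtu by (simp add: unit_cdf_def)

lemma dtu_mono: "x \<in> {0..1} \<Longrightarrow> y \<in> {0..1} \<Longrightarrow> x \<le> y \<Longrightarrow> dtu v x \<le> dtu v y"
  using unit_cdf_dtu by (simp add: unit_cdf_def mono_on_def)

lemma dtu_range: "x \<in> {0..1} \<Longrightarrow> dtu v x \<in> {0..1}"
  using unit_cdf_dtu by (rule unit_cdf_range)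

lemma dtu_mediant:
  "farey_pair p q r s \<Longrightarrow>
     dtu v (of_int (p + r) / of_int (q + s)) = (1 - v) * dtu v (of_int p / of_int q) + v * dtu v (of_int r / of_int s)"
  using dtu_rule_dtu by (simp add: dtu_rule_iff)

end

lemma farey_pair_inverse_branch:
  assumes "farey_pair p q r s" "1 \<le> a"
  shows "farey_pair s (a * s + r) q (a * q + p)"
proof -
  have r: "0 < r" and pq: "p < q" using farey_pair_bounds[OF assms(1)] by auto
  have p: "0 \<le> p" and s: "0 < s" and det: "r * q - p * s = 1"
    using assms(1) by (auto simp: farey_pair_def)
  have "s \<le> a * s" "q \<le> a * q" using assms(2) s p pq by simp_all
  then have "0 < a * s + r" "0 < a * q + p" "q \<le> a * q + p" using r p s pq by linarith+
  moreover have "q * (a * s + r) - s * (a * q + p) = 1" using det by (simp add: algebra_simps)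
  ultimately show ?thesis using s by (simp add: farey_pair_def)
qed

context
  fixes v :: real
  assumes v: "0 < v" "v < 1"
begin

lemma dtu_unit_fraction: "1 \<le> a \<Longrightarrow> dtu v (1 / real a) = v ^ (a - 1)"
proof (induction a rule: dec_induct)
  case base
  then show ?case using dtu_1[OF v] by simp
next
  case (step a)
  have "farey_pair 0 1 1 (int a)" using step by (simp add: farey_pair_def)
  from dtu_mediant[OF v this] have "dtu v (1 / (1 + real a)) = v * dtu v (1 / real a)"
    using dtu_0[OF v] by simp
  then show ?case using step by (simp add: power_eq_if)
qed

lemma dtu_inverse_branch_mediant:
  assumes fp: "farey_pair p q r s" and a: "1 \<le> a"
  shows "dtu v (1 / (real a + of_int (p + r) / of_int (q + s))) =
    (1 - v) * dtu v (1 / (real a + of_int r / of_int s)) + v * dtu v (1 / (real a + of_int p / of_int q))"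
proof -
  have branch: "1 / (real a + of_int x / of_int y) = of_int y / of_int (int a * y + x)"
    if "0 \<le> x" "0 < y" for x y :: int
    using that a by (simp add: field_simps)
  have "0 < r" using farey_pair_bounds[OF fp] by auto
  then have "0 \<le> p" "0 < q" "0 \<le> r" "0 < s" using fp by (auto simp: farey_pair_def)
  moreover have "dtu v (of_int (s + q) / of_int (int a * s + r + (int a * q + p))) =
      (1 - v) * dtu v (of_int s / of_int (int a * s + r)) + v * dtu v (of_int q / of_int (int a * q + p))"
    using dtu_mediant[OF v farey_pair_inverse_branch[OF fp, of "int a"]] a by simp
  ultimately show ?thesis
    using branch[of "p + r" "q + s"] branch[of r s] branch[of p q] by (simp add: algebra_simps)
qed

text \<open>The inverse branch \<open>z \<mapsto> 1/(a + z)\<close> reverses the order of Farey pairs, which exchanges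
  the weights \<open>\<lambda>\<close> and \<open>1 - \<lambda>\<close> in the mediant rule.\<close>

lemma dtu_inverse_branch:
  assumes a: "1 \<le> a" and z: "z \<in> {0..1}"
  shows "dtu v (1 / (real a + z)) = v ^ (a - 1) - v ^ (a - 1) * (1 - v) * dtu (1 - v) z"
proof -
  define c where "c = v ^ (a - 1)"
  define k where "k = v ^ (a - 1) * (1 - v)"
  have k: "0 < k" using v by (simp add: k_def)
  define F where "F z = (if z \<in> {0..1} then (c - dtu v (1 / (real a + z))) / k else 0)" for z
  have F: "F w = (c - dtu v (1 / (real a + w))) / k" if "w \<in> {0..1}" for w
    using that by (simp add: F_def)
  have "dtu_rule (1 - v) F"
    unfolding dtu_rule_iff
  proof (intro conjI allI impI)
    have "continuous_on {0..1} (\<lambda>z. dtu v (1 / (real a + z)))"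
      using a dtu_range[OF v]
      by (intro continuous_on_compose2[OF continuous_on_dtu[OF v]] continuous_intros) (auto simp: field_simps)
    then have "continuous_on {0..1} (\<lambda>z. (c - dtu v (1 / (real a + z))) / k)"
      by (intro continuous_intros) (use k in auto)
    then show "continuous_on {0..1} F" by (rule continuous_on_eq) (simp add: F_def)
    show "F 0 = 0" using dtu_unit_fraction[OF a] by (simp add: F_def c_def)
    have "dtu v (1 / (real a + 1)) = c * v"
      using dtu_unit_fraction[of "Suc a"] a by (simp add: c_def add.commute power_eq_if)
    moreover have "c - c * v = k" by (simp add: c_def k_def algebra_simps)
    ultimately show "F 1 = 1" using k by (simp add: F_def)
    show "F x = 0" if "x \<notin> {0..1}" for x using that by (simp add: F_def del: atLeastAtMost_iff)
  next
    fix p q r s assume fp: "farey_pair p q r s"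
    have "p < q" using farey_pair_bounds[OF fp] by auto
    then have I: "of_int (p + r) / of_int (q + s) \<in> {0..1::real}" "of_int p / of_int q \<in> {0..1::real}"
      "of_int r / of_int s \<in> {0..1::real}"
      using fp farey_pair_bounds[OF fp] by (auto simp: farey_pair_def field_simps)
    show "F (of_int (p + r) / of_int (q + s)) =
        (1 - (1 - v)) * F (of_int p / of_int q) + (1 - v) * F (of_int r / of_int s)"
      unfolding F[OF I(1)] F[OF I(2)] F[OF I(3)] dtu_inverse_branch_mediant[OF fp a]
      using k by (simp add: field_simps)
  qed
  then have "F = dtu (1 - v)"
    using dtu_rule_unique dtu_rule_dtu[of "1 - v"] v by simp
  then have "k * dtu (1 - v) z = c - dtu v (1 / (real a + z))"
    using F[OF z] k by simp
  then show ?thesis by (simp add: c_def k_def)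
qed

lemma dtu_half: "dtu v (1/2) = v"
  using dtu_unit_fraction[of 2] by simp

lemma dtu_third: "dtu v (1/3) = v ^ 2"
  using dtu_unit_fraction[of 3] by simp

lemma dtu_three_quarters: "1 - dtu v (3/4) = (1 - v) ^ 3"
proof -
  have "farey_pair 1 2 1 1" "farey_pair 2 3 1 1" by (simp_all add: farey_pair_def)
  from this[THEN dtu_mediant[OF v]] have "dtu v (2/3) = (1 - v) * v + v" "dtu v (3/4) = (1 - v) * dtu v (2/3) + v"
    using dtu_half dtu_1[OF v] by simp_all
  then have "dtu v (3/4) = (1 - v) * ((1 - v) * v + v) + v" by simp
  then show ?thesis by (simp add: power3_eq_cube algebra_simps)
qed

end

lemma gauss_iter_irrational:
  assumes "0 < x" "x < 1" "x \<notin> \<rat>"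
  shows "0 < (gauss_map ^^ k) x \<and> (gauss_map ^^ k) x < 1 \<and> (gauss_map ^^ k) x \<notin> \<rat>"
proof (induction k)
  case 0
  then show ?case using assms by simp
next
  case (Suc k)
  let ?u = "1 / (gauss_map ^^ k) x"
  have "?u \<notin> \<rat>"
    using Suc Rats_divide[OF Rats_1, of ?u] by auto
  then have "frac ?u \<notin> \<rat>"
    using Rats_add[of "frac ?u" "of_int \<lfloor>?u\<rfloor>"] by (auto simp: frac_def)
  moreover from this have "frac ?u \<noteq> 0" using Rats_0 by metis
  moreover have "(gauss_map ^^ Suc k) x = frac ?u"
    by (simp only: funpow.simps o_apply gauss_map_def[of "(gauss_map ^^ k) x"])
  ultimately show ?case
    using frac_ge_0[of ?u] frac_lt_1[of ?u] by simp
qed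

lemma gauss_iter_Suc_inverse:
  assumes "0 < x" "x < 1" "x \<notin> \<rat>"
  shows "1 \<le> cf_pq x k" "(gauss_map ^^ k) x = 1 / (real (cf_pq x k) + (gauss_map ^^ Suc k) x)"
proof -
  let ?t = "(gauss_map ^^ k) x"
  have t: "0 < ?t" "?t < 1" using gauss_iter_irrational[OF assms] by auto
  then have "1 \<le> \<lfloor>1 / ?t\<rfloor>" by (simp add: le_floor_iff)
  from nat_mono[OF this] show "1 \<le> cf_pq x k" by (simp add: cf_pq_def)
  have "real (cf_pq x k) = of_int \<lfloor>1 / ?t\<rfloor>"
    unfolding cf_pq_def by (rule of_nat_nat) (use \<open>1 \<le> \<lfloor>1 / ?t\<rfloor>\<close> in linarith)
  then have "real (cf_pq x k) + (gauss_map ^^ Suc k) x = 1 / ?t"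
    by (simp add: gauss_map_def frac_def)
  then show "?t = 1 / (real (cf_pq x k) + (gauss_map ^^ Suc k) x)" using t by simp
qed

text \<open>\<open>cf_den d k\<close> and \<open>cf_den_prev d k\<close> are the denominators \<open>q\<^sub>k\<close>, \<open>q\<^sub>k\<^sub>-\<^sub>1\<close> of the
  convergents of \<open>[0; d 0, d 1, \<dots>]\<close>, with \<open>q\<^sub>0 = 1\<close> and \<open>q\<^sub>-\<^sub>1 = 0\<close>; likewise for the
  numerators.\<close>

primrec cf_recurrence :: "(nat \<Rightarrow> real) \<Rightarrow> real \<times> real \<Rightarrow> nat \<Rightarrow> real \<times> real" where
  "cf_recurrence d u 0 = u"
| "cf_recurrence d u (Suc k) =
     (d k * fst (cf_recurrence d u k) + snd (cf_recurrence d u k), fst (cf_recurrence d u k))"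

definition cf_num :: "(nat \<Rightarrow> real) \<Rightarrow> nat \<Rightarrow> real" where
  "cf_num d k = fst (cf_recurrence d (0, 1) k)"

definition cf_num_prev :: "(nat \<Rightarrow> real) \<Rightarrow> nat \<Rightarrow> real" where
  "cf_num_prev d k = snd (cf_recurrence d (0, 1) k)"

definition cf_den :: "(nat \<Rightarrow> real) \<Rightarrow> nat \<Rightarrow> real" where
  "cf_den d k = fst (cf_recurrence d (1, 0) k)"

definition cf_den_prev :: "(nat \<Rightarrow> real) \<Rightarrow> nat \<Rightarrow> real" where
  "cf_den_prev d k = snd (cf_recurrence d (1, 0) k)"

lemma cf_recurrence_0 [simp]:
  "cf_num d 0 = 0" "cf_num_prev d 0 = 1" "cf_den d 0 = 1" "cf_den_prev d 0 = 0"
  by (simp_all add: cf_num_def cf_num_prev_def cf_den_def cf_den_prev_def)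

lemma cf_recurrence_Suc [simp]:
  "cf_num d (Suc k) = d k * cf_num d k + cf_num_prev d k" "cf_num_prev d (Suc k) = cf_num d k"
  "cf_den d (Suc k) = d k * cf_den d k + cf_den_prev d k" "cf_den_prev d (Suc k) = cf_den d k"
  by (simp_all add: cf_num_def cf_num_prev_def cf_den_def cf_den_prev_def)

lemma cf_det: "cf_num_prev d k * cf_den d k - cf_num d k * cf_den_prev d k = (-1) ^ k"
proof (induction k)
  case (Suc k)
  have "cf_num_prev d (Suc k) * cf_den d (Suc k) - cf_num d (Suc k) * cf_den_prev d (Suc k) =
      - (cf_num_prev d k * cf_den d k - cf_num d k * cf_den_prev d k)"
    by (simp add: algebra_simps)
  then show ?case using Suc by simp
qed simp

primrec cf_prefix :: "(nat \<Rightarrow> real) \<Rightarrow> nat \<Rightarrow> real \<Rightarrow> real" where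
  "cf_prefix d 0 z = z"
| "cf_prefix d (Suc k) z = cf_prefix d k (1 / (d k + z))"

context
  fixes d :: "nat \<Rightarrow> real"
  assumes d: "\<And>k. 1 \<le> d k"
begin

lemma cf_den_bounds: "1 \<le> cf_den d k \<and> 0 \<le> cf_den_prev d k \<and> cf_den_prev d k \<le> cf_den d k"
proof (induction k)
  case (Suc k)
  have "cf_den d k \<le> d k * cf_den d k" using d[of k] Suc by simp
  then show ?case using Suc by (auto; linarith)
qed simp

lemma cf_den_ge: "real k \<le> cf_den d k"
proof (induction k)
  case (Suc k)
  show ?case
  proof (cases k)
    case 0
    then show ?thesis using d[of 0] by simp
  next
    case (Suc j)
    then have "1 \<le> cf_den_prev d k" using cf_den_bounds[of j] by simp
    moreover have "cf_den d k \<le> d k * cf_den d k" using d[of k] cf_den_bounds[of k] by simp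
    ultimately show ?thesis using Suc.IH by (simp only: cf_recurrence_Suc of_nat_Suc)
  qed
qed simp

lemma cf_den_mono: "cf_den d k \<le> cf_den d (Suc k)"
proof -
  have "cf_den d k \<le> d k * cf_den d k" using d[of k] cf_den_bounds[of k] by simp
  then show ?thesis using cf_den_bounds[of k] unfolding cf_recurrence_Suc by linarith
qed

lemma cf_den_add_pos: "0 \<le> z \<Longrightarrow> cf_den d k \<le> cf_den d k + z * cf_den_prev d k"
  using cf_den_bounds[of k] by simp

lemma cf_prefix_eq:
  "0 \<le> z \<Longrightarrow> cf_prefix d k z = (cf_num d k + z * cf_num_prev d k) / (cf_den d k + z * cf_den_prev d k)"
proof (induction k arbitrary: z)
  case (Suc k)
  define t where "t = d k + z"
  have t: "1 \<le> t" using d[of k] Suc.prems by (simp add: t_def)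
  have "cf_prefix d (Suc k) z = (cf_num d k + 1 / t * cf_num_prev d k) / (cf_den d k + 1 / t * cf_den_prev d k)"
    using Suc.IH[of "1 / t"] t by (simp add: t_def)
  also have "\<dots> = ((cf_num d k * t + cf_num_prev d k) / t) / ((cf_den d k * t + cf_den_prev d k) / t)"
    using t by (simp add: add_divide_distrib)
  also have "\<dots> = (cf_num d k * t + cf_num_prev d k) / (cf_den d k * t + cf_den_prev d k)"
    using t by simp
  also have "\<dots> = (cf_num d (Suc k) + z * cf_num_prev d (Suc k)) / (cf_den d (Suc k) + z * cf_den_prev d (Suc k))"
    by (simp add: t_def algebra_simps)
  finally show ?case .
qed simp

lemma cf_prefix_diff:
  assumes "0 \<le> z" "0 \<le> w"
  shows "cf_prefix d k z - cf_prefix d k w =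
    (-1) ^ k * (z - w) / ((cf_den d k + z * cf_den_prev d k) * (cf_den d k + w * cf_den_prev d k))"
proof -
  define a where "a = cf_den d k + z * cf_den_prev d k"
  define b where "b = cf_den d k + w * cf_den_prev d k"
  have "0 < a" "0 < b"
    using cf_den_add_pos[OF assms(1), of k] cf_den_add_pos[OF assms(2), of k] cf_den_bounds[of k]
    by (simp_all add: a_def b_def)
  then have "cf_prefix d k z - cf_prefix d k w =
      ((cf_num d k + z * cf_num_prev d k) * b - (cf_num d k + w * cf_num_prev d k) * a) / (a * b)"
    unfolding cf_prefix_eq[OF assms(1)] cf_prefix_eq[OF assms(2)] a_def[symmetric] b_def[symmetric]
    by (simp add: field_simps)
  also have "(cf_num d k + z * cf_num_prev d k) * b - (cf_num d k + w * cf_num_prev d k) * a =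
      (z - w) * (cf_num_prev d k * cf_den d k - cf_num d k * cf_den_prev d k)"
    by (simp add: a_def b_def algebra_simps)
  finally show ?thesis unfolding cf_det a_def b_def by (simp add: mult.commute)
qed

lemma cf_prefix_dist:
  assumes "z \<in> {0..1}" "w \<in> {0..1}"
  shows "\<bar>cf_prefix d k z - cf_prefix d k w\<bar> \<le> 1 / (cf_den d k)\<^sup>2"
proof -
  define A where "A = cf_den d k + z * cf_den_prev d k"
  define B where "B = cf_den d k + w * cf_den_prev d k"
  have q: "1 \<le> cf_den d k" using cf_den_bounds by auto
  have A: "cf_den d k \<le> A" and B: "cf_den d k \<le> B"
    using cf_den_add_pos[of z k] cf_den_add_pos[of w k] assms by (simp_all add: A_def B_def)
  have "\<bar>cf_prefix d k z - cf_prefix d k w\<bar> = \<bar>z - w\<bar> / (A * B)"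
    using cf_prefix_diff[of z w k] assms A B q by (simp add: A_def B_def abs_mult abs_divide)
  also have "\<dots> \<le> 1 / (cf_den d k * cf_den d k)"
    using assms A B q by (intro frac_le mult_mono) auto
  finally show ?thesis by (simp add: power2_eq_square)
qed

lemma cf_prefix_in_unit: "z \<in> {0..1} \<Longrightarrow> cf_prefix d k z \<in> {0..1}"
proof (induction k arbitrary: z)
  case (Suc k)
  have "1 / (d k + z) \<in> {0..1}" using d[of k] Suc.prems by (auto simp: field_simps)
  then show ?case using Suc.IH by simp
qed simp

lemma continuous_on_cf_prefix: "continuous_on {0..1} (cf_prefix d k)"
proof -
  have "continuous_on {0..1} (\<lambda>z. (cf_num d k + z * cf_num_prev d k) / (cf_den d k + z * cf_den_prev d k))"
  proof (intro continuous_intros ballI)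
    fix z :: real assume "z \<in> {0..1}"
    then have "cf_den d k \<le> cf_den d k + z * cf_den_prev d k" by (intro cf_den_add_pos) auto
    then show "cf_den d k + z * cf_den_prev d k \<noteq> 0" using cf_den_bounds[of k] by linarith
  qed
  then show ?thesis by (rule continuous_on_eq) (simp add: cf_prefix_eq)
qed

lemma cf_prefix_Suc_image:
  "cf_prefix d (Suc k) ` {0..1} = cf_prefix d k ` {1 / (d k + 1)..1 / d k}"
proof -
  have "cf_prefix d (Suc k) ` {0..1} = cf_prefix d k ` ((\<lambda>z. 1 / (d k + z)) ` {0..1})"
    by (simp add: image_image)
  moreover have "(\<lambda>z. 1 / (d k + z)) ` {0..1} = {1 / (d k + 1)..1 / d k}"
  proof
    show "(\<lambda>z. 1 / (d k + z)) ` {0..1} \<subseteq> {1 / (d k + 1)..1 / d k}"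
      using d[of k] by (auto simp: frac_le)
    show "{1 / (d k + 1)..1 / d k} \<subseteq> (\<lambda>z. 1 / (d k + z)) ` {0..1}"
    proof
      fix t assume t: "t \<in> {1 / (d k + 1)..1 / d k}"
      then have "0 < t" using d[of k] by (auto intro: less_le_trans[rotated])
      with t have "1 / t - d k \<in> {0..1}" using d[of k] by (auto simp: field_simps)
      moreover have "t = 1 / (d k + (1 / t - d k))" using \<open>0 < t\<close> by simp
      ultimately show "t \<in> (\<lambda>z. 1 / (d k + z)) ` {0..1}" by blast
    qed
  qed
  ultimately show ?thesis by simp
qed

end

lemma exists_last_step:
  fixes P :: "nat \<Rightarrow> bool"
  assumes "K \<le> N" "P K" "\<not> P N"
  shows "\<exists>k\<ge>K. P k \<and> \<not> P (Suc k)"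
  using assms
proof (induction N rule: dec_induct)
  case (step n)
  then show ?case by (cases "P n") auto
qed simp

abbreviation cf_digits :: "real \<Rightarrow> nat \<Rightarrow> real" where
  "cf_digits x \<equiv> \<lambda>k. real (cf_pq x k)"

text \<open>The level-\<open>k\<close> cylinder of \<open>x\<close>: the numbers whose first \<open>k\<close> partial quotients agree with
  those of \<open>x\<close>, together with its endpoints.\<close>

definition cylinder :: "real \<Rightarrow> nat \<Rightarrow> real set" where
  "cylinder x k = cf_prefix (cf_digits x) k ` {0..1}"

text \<open>On the level-\<open>k\<close> cylinder, \<open>g\<^sub>\<lambda>\<close> is an affine image of \<open>g\<^bsub>alt_param \<lambda> k\<^esub>\<close> with
  scale factor \<open>cylinder_scale \<lambda> x k\<close>, since each inverse branch of the Gauss map swaps \<open>\<lambda>\<close>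
  and \<open>1 - \<lambda>\<close>.\<close>

definition alt_param :: "real \<Rightarrow> nat \<Rightarrow> real" where
  "alt_param v k = (if even k then v else 1 - v)"

definition cylinder_scale :: "real \<Rightarrow> real \<Rightarrow> nat \<Rightarrow> real" where
  "cylinder_scale v x k = (\<Prod>i<k. alt_param v i ^ (cf_pq x i - 1) * (1 - alt_param v i))"

lemma alt_param_Suc: "alt_param v (Suc k) = 1 - alt_param v k"
  by (simp add: alt_param_def)

lemma alt_param_bounds: "0 < v \<Longrightarrow> v < 1 \<Longrightarrow> 0 < alt_param v k \<and> alt_param v k < 1"
  by (simp add: alt_param_def)

lemma cylinder_scale_Suc:
  "cylinder_scale v x (Suc k) = cylinder_scale v x k * (alt_param v k ^ (cf_pq x k - 1) * (1 - alt_param v k))"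
  by (simp add: cylinder_scale_def)

lemma cylinder_scale_pos: "0 < v \<Longrightarrow> v < 1 \<Longrightarrow> 0 < cylinder_scale v x k"
  unfolding cylinder_scale_def using alt_param_bounds by (auto intro!: prod_pos)

locale irrational_unit =
  fixes x :: real
  assumes pos: "0 < x" and less_one: "x < 1" and irrational: "x \<notin> \<rat>"
begin

lemma digit_ge_1: "1 \<le> cf_digits x k"
  using gauss_iter_Suc_inverse(1)[OF pos less_one irrational] by simp

lemma tail_bounds: "0 < (gauss_map ^^ k) x" "(gauss_map ^^ k) x < 1"
  using gauss_iter_irrational[OF pos less_one irrational] by auto

lemma tail_eq: "(gauss_map ^^ k) x = 1 / (cf_digits x k + (gauss_map ^^ Suc k) x)"
  using gauss_iter_Suc_inverse(2)[OF pos less_one irrational] .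

lemma cf_prefix_tail: "cf_prefix (cf_digits x) k ((gauss_map ^^ k) x) = x"
proof (induction k)
  case (Suc k)
  have "cf_prefix (cf_digits x) (Suc k) ((gauss_map ^^ Suc k) x) = cf_prefix (cf_digits x) k ((gauss_map ^^ k) x)"
    by (simp only: cf_prefix.simps(2) tail_eq[of k, symmetric])
  then show ?case using Suc.IH by (rule trans)
qed simp

lemma tail_in_unit: "(gauss_map ^^ k) x \<in> {0..1}"
  using tail_bounds[of k] by simp

lemma mem_cylinder: "x \<in> cylinder x k"
  unfolding cylinder_def using tail_in_unit[of k] by (rule rev_image_eqI) (simp add: cf_prefix_tail)

lemma cylinder_subset: "cylinder x k \<subseteq> {0..1}"
  unfolding cylinder_def using cf_prefix_in_unit[of "cf_digits x", OF digit_ge_1] by auto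

lemma cylinder_Suc: "cylinder x (Suc k) = cf_prefix (cf_digits x) k ` {1 / (cf_digits x k + 1)..1 / cf_digits x k}"
  unfolding cylinder_def by (rule cf_prefix_Suc_image[of "cf_digits x", OF digit_ge_1])

lemma cylinder_dist:
  assumes "y \<in> cylinder x k"
  shows "\<bar>y - x\<bar> \<le> 1 / (cf_den (cf_digits x) k)\<^sup>2"
proof -
  obtain z where z: "z \<in> {0..1}" "y = cf_prefix (cf_digits x) k z"
    using assms unfolding cylinder_def by blast
  show ?thesis
    using cf_prefix_dist[of "cf_digits x", OF digit_ge_1 z(1) tail_in_unit[of k], where k = k]
    by (simp add: z(2) cf_prefix_tail)
qed

lemma cylinder_endpoints_opposite:
  "(cf_prefix (cf_digits x) k 0 - x) * (cf_prefix (cf_digits x) k 1 - x) < 0"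
proof -
  let ?d = "cf_digits x" and ?t = "(gauss_map ^^ k) x"
  define D where "D z = (cf_den ?d k + z * cf_den_prev ?d k) * (cf_den ?d k + ?t * cf_den_prev ?d k)" for z
  have D: "0 < D z" if "0 \<le> z" for z
  proof -
    have "cf_den ?d k \<le> cf_den ?d k + z * cf_den_prev ?d k"
      "cf_den ?d k \<le> cf_den ?d k + ?t * cf_den_prev ?d k"
      using that tail_bounds(1)[of k] by (intro cf_den_add_pos[of ?d, OF digit_ge_1]; simp)+
    then show ?thesis
      using cf_den_bounds[of ?d, OF digit_ge_1, of k] unfolding D_def by (intro mult_pos_pos) linarith+
  qed
  have endpoint: "cf_prefix ?d k z - x = (-1) ^ k * (z - ?t) / D z" if "0 \<le> z" for z
    using cf_prefix_diff[of "cf_digits x", OF digit_ge_1 that, of ?t k] tail_in_unit[of k]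
    by (simp add: D_def cf_prefix_tail)
  have "(cf_prefix ?d k 0 - x) * (cf_prefix ?d k 1 - x) = - (?t * (1 - ?t)) / (D 0 * D 1)"
    unfolding endpoint[of 0, simplified] endpoint[of 1, simplified] using D[of 0] D[of 1]
    by (simp add: field_simps flip: power_mult_distrib)
  also have "\<dots> < 0" using tail_bounds D[of 0] D[of 1] by (simp add: divide_neg_pos)
  finally show ?thesis .
qed

lemma cylinder_nhd: "\<exists>e>0. \<forall>y. \<bar>y - x\<bar> < e \<longrightarrow> y \<in> cylinder x k"
proof -
  let ?p = "cf_prefix (cf_digits x) k"
  note opposite = cylinder_endpoints_opposite[of k]
  define e where "e = min \<bar>?p 0 - x\<bar> \<bar>?p 1 - x\<bar>"
  have "y \<in> cylinder x k" if y: "\<bar>y - x\<bar> < e" for y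
  proof -
    have cont: "continuous_on {0..1} ?p" by (rule continuous_on_cf_prefix[of "cf_digits x", OF digit_ge_1])
    have "\<exists>z\<in>{0..1}. ?p z = y"
    proof (cases "?p 0 < x")
      case True
      with opposite have "x < ?p 1" by (auto simp: mult_less_0_iff)
      with True y have "?p 0 \<le> y" "y \<le> ?p 1" by (auto simp: e_def)
      then show ?thesis using IVT'[of ?p 0 y 1] cont by auto
    next
      case False
      with opposite have "?p 1 < x" "x < ?p 0" by (auto simp: mult_less_0_iff)
      with y have "?p 1 \<le> y" "y \<le> ?p 0" by (auto simp: e_def)
      then show ?thesis using IVT2'[of ?p 1 y 0] cont by auto
    qed
    then show ?thesis by (auto simp: cylinder_def)
  qed
  moreover have "0 < e" using opposite by (auto simp: e_def)
  ultimately show ?thesis by blast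
qed

lemma cylinder_exit:
  assumes "y \<in> cylinder x K" "y \<noteq> x"
  shows "\<exists>k\<ge>K. y \<in> cylinder x k \<and> y \<notin> cylinder x (Suc k)"
proof -
  obtain N :: nat where N: "1 / \<bar>y - x\<bar> < real N" using reals_Archimedean2 by blast
  have "0 < \<bar>y - x\<bar>" using assms by simp
  then have "0 < 1 / \<bar>y - x\<bar>" by simp
  then have N_pos: "0 < real N" using N by linarith
  have "y \<notin> cylinder x (max N K)"
  proof
    assume "y \<in> cylinder x (max N K)"
    then have "\<bar>y - x\<bar> \<le> 1 / (cf_den (cf_digits x) (max N K))\<^sup>2" by (rule cylinder_dist)
    also have "\<dots> \<le> 1 / real N"
    proof -
      have "real N \<le> cf_den (cf_digits x) (max N K)"
        using cf_den_ge[of "cf_digits x", OF digit_ge_1, of "max N K"] by simp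
      moreover have "cf_den (cf_digits x) (max N K) \<le> (cf_den (cf_digits x) (max N K))\<^sup>2"
        using cf_den_bounds[of "cf_digits x", OF digit_ge_1, of "max N K"] by (simp add: power2_eq_square)
      ultimately show ?thesis using N_pos by (intro divide_left_mono) auto
    qed
    finally show False using N N_pos \<open>0 < \<bar>y - x\<bar>\<close> by (simp add: field_simps)
  qed
  then show ?thesis using exists_last_step[of K "max N K" "\<lambda>k. y \<in> cylinder x k"] assms by simp
qed

lemma cylinder_diff_Suc:
  assumes "y \<in> cylinder x k" "y \<notin> cylinder x (Suc k)"
  obtains z where "z \<in> {0..1}" "y = cf_prefix (cf_digits x) k z"
    "z < 1 / (cf_digits x k + 1) \<or> 1 / cf_digits x k < z"
proof -
  obtain z where z: "z \<in> {0..1}" "y = cf_prefix (cf_digits x) k z"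
    using assms(1) unfolding cylinder_def by blast
  moreover have "z \<notin> {1 / (cf_digits x k + 1)..1 / cf_digits x k}"
    using assms(2) z(2) unfolding cylinder_Suc by blast
  ultimately show ?thesis using that by auto
qed

lemma dtu_on_cylinder:
  assumes v: "0 < v" "v < 1"
  shows "\<exists>A S. \<bar>S\<bar> = cylinder_scale v x k \<and>
    (\<forall>z\<in>{0..1}. dtu v (cf_prefix (cf_digits x) k z) = A + S * dtu (alt_param v k) z)"
proof (induction k)
  case 0
  show ?case by (intro exI[of _ 0] exI[of _ 1]) (simp add: alt_param_def cylinder_scale_def)
next
  case (Suc k)
  then obtain A S where S: "\<bar>S\<bar> = cylinder_scale v x k"
    and AS: "\<And>z. z \<in> {0..1} \<Longrightarrow> dtu v (cf_prefix (cf_digits x) k z) = A + S * dtu (alt_param v k) z"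
    by blast
  let ?w = "alt_param v k" and ?a = "cf_pq x k"
  let ?c = "?w ^ (?a - 1)"
  have a: "1 \<le> ?a" using digit_ge_1[of k] by simp
  show ?case
  proof (intro exI conjI ballI)
    show "\<bar>- S * ?c * (1 - ?w)\<bar> = cylinder_scale v x (Suc k)"
      using S alt_param_bounds[OF v, of k] by (simp add: cylinder_scale_Suc abs_mult)
    fix z :: real assume z: "z \<in> {0..1}"
    have "1 / (real ?a + z) \<in> {0..1}" using a z by (auto simp: field_simps)
    then have "dtu v (cf_prefix (cf_digits x) (Suc k) z) = A + S * dtu ?w (1 / (real ?a + z))"
      using AS by simp
    also have "dtu ?w (1 / (real ?a + z)) = ?c - ?c * (1 - ?w) * dtu (alt_param v (Suc k)) z"
      using dtu_inverse_branch[of ?w ?a z] alt_param_bounds[OF v, of k] a z by (simp add: alt_param_Suc)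
    finally show "dtu v (cf_prefix (cf_digits x) (Suc k) z) =
        (A + S * ?c) + (- S * ?c * (1 - ?w)) * dtu (alt_param v (Suc k)) z"
      by (simp add: algebra_simps)
  qed
qed

end

lemma dtu_gap_left_of_digit_interval:
  assumes v: "0 < v" "v < 1" and a: "1 \<le> a" and t: "t \<in> {0..1}" "t \<le> 3/4"
    and z: "z \<in> {0..1}" "z \<le> 1 / (real a + 1)"
  shows "v ^ (a - 1) * (1 - v) * v ^ 3 \<le> dtu v (1 / (real a + t)) - dtu v z"
proof -
  have v': "0 < 1 - v" "1 - v < 1" using v by auto
  have "dtu v z \<le> dtu v (1 / (real a + 1))" using dtu_mono[OF v] z by auto
  also have "\<dots> = v ^ (a - 1) - v ^ (a - 1) * (1 - v)"
    using dtu_inverse_branch[OF v a, of 1] dtu_1[OF v'] by simp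
  finally have "dtu v z \<le> v ^ (a - 1) - v ^ (a - 1) * (1 - v)" .
  moreover have "dtu (1 - v) t \<le> 1 - v ^ 3"
    using dtu_mono[OF v' t(1), of "3/4"] t dtu_three_quarters[OF v'] by simp
  then have "v ^ (a - 1) * (1 - v) * v ^ 3 \<le> v ^ (a - 1) * (1 - v) * (1 - dtu (1 - v) t)"
    using v by (intro mult_left_mono) auto
  ultimately show ?thesis using dtu_inverse_branch[OF v a t(1)] by (simp add: algebra_simps)
qed

lemma dtu_gap_right_of_digit_interval:
  assumes v: "0 < v" "v < 1" and a: "1 \<le> a" and t: "t \<in> {0..1}" "1/3 \<le> t"
    and z: "z \<in> {0..1}" "1 / real a \<le> z"
  shows "v ^ (a - 1) * (1 - v) * (1 - v) ^ 2 \<le> dtu v z - dtu v (1 / (real a + t))"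
proof -
  have v': "0 < 1 - v" "1 - v < 1" using v by auto
  have "1 / real a \<in> {0..1}" using a by simp
  then have "dtu v (1 / real a) \<le> dtu v z" using dtu_mono[OF v _ z(1)] z(2) by blast
  then have "v ^ (a - 1) \<le> dtu v z" using dtu_unit_fraction[OF v a] by simp
  moreover have "(1 - v) ^ 2 \<le> dtu (1 - v) t"
    using dtu_mono[OF v' _ t(1), of "1/3"] t dtu_third[OF v'] by simp
  then have "v ^ (a - 1) * (1 - v) * (1 - v) ^ 2 \<le> v ^ (a - 1) * (1 - v) * dtu (1 - v) t"
    using v by (intro mult_left_mono) auto
  ultimately show ?thesis using dtu_inverse_branch[OF v a t(1)] by (simp add: algebra_simps)
qed

lemma dtu_gap_outside_digit_interval:
  assumes v: "0 < v" "v < 1" and a: "a \<in> {1, 2}" and t: "1/3 \<le> t" "t \<le> 3/4"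
    and z: "z \<in> {0..1}" and outside: "z \<le> 1 / (real a + 1) \<or> 1 / real a \<le> z"
  shows "v * (1 - v) * min (v ^ 3) ((1 - v) ^ 2) \<le> \<bar>dtu v z - dtu v (1 / (real a + t))\<bar>"
proof -
  have a1: "1 \<le> a" and tin: "t \<in> {0..1}" using a t by auto
  define c where "c = v ^ (a - 1) * (1 - v)"
  have "v \<le> v ^ (a - 1)" using a v by auto
  then have "v * (1 - v) \<le> c" unfolding c_def using v by (intro mult_right_mono) auto
  then have "v * (1 - v) * min (v ^ 3) ((1 - v) ^ 2) \<le> c * min (v ^ 3) ((1 - v) ^ 2)"
    using v by (intro mult_right_mono) auto
  moreover have "c * min (v ^ 3) ((1 - v) ^ 2) \<le> c * v ^ 3" "c * min (v ^ 3) ((1 - v) ^ 2) \<le> c * (1 - v) ^ 2"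
    using v by (intro mult_left_mono; simp add: c_def)+
  moreover note dtu_gap_left_of_digit_interval[OF v a1 tin t(2) z, folded c_def]
    dtu_gap_right_of_digit_interval[OF v a1 tin t(1) z, folded c_def]
  ultimately show ?thesis using outside by fastforce
qed

definition golden_inv :: real where
  "golden_inv = 1 / ((1 + sqrt 5) / 2)"

lemma golden_inv_eq: "golden_inv = (sqrt 5 - 1) / 2"
proof -
  have "(1 + sqrt 5) * (sqrt 5 - 1) = 4" by (simp add: algebra_simps)
  moreover have "0 < 1 + sqrt 5" by (simp add: add_pos_nonneg)
  ultimately show ?thesis unfolding golden_inv_def by (simp add: field_simps)
qed

lemma golden_inv_bounds: "0.618 < golden_inv" "golden_inv < 0.61805"
proof -
  have "2.236 < sqrt 5" "sqrt 5 < 2.2361"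
    by (rule real_less_rsqrt; simp add: power2_eq_square)
       (rule real_less_lsqrt; simp add: power2_eq_square)
  then show "0.618 < golden_inv" "golden_inv < 0.61805" unfolding golden_inv_eq by auto
qed

lemma golden_inv_pos: "0 < golden_inv" and golden_inv_less_1: "golden_inv < 1"
  using golden_inv_bounds by auto

lemma one_minus_golden_inv: "1 - golden_inv = golden_inv ^ 2"
proof -
  have "(sqrt 5)\<^sup>2 = 5" by simp
  then show ?thesis unfolding golden_inv_eq by (simp add: field_simps power2_eq_square)
qed

lemma golden_inv_power_bound:
  assumes "a \<in> {1, 2}" "b \<in> {1, 2}"
  shows "6/5 \<le> golden_inv ^ a * (1 - golden_inv) ^ b * (real b * (real a + 1/3) + 1)\<^sup>2"
proof -
  have "6/5 \<le> (0.618::real) ^ (a + 2 * b) * (real b * (real a + 1/3) + 1)\<^sup>2"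
    using assms by (auto simp: eval_nat_numeral)
  also have "\<dots> \<le> golden_inv ^ (a + 2 * b) * (real b * (real a + 1/3) + 1)\<^sup>2"
    using golden_inv_bounds by (intro mult_right_mono power_mono) auto
  also have "\<dots> = golden_inv ^ a * (1 - golden_inv) ^ b * (real b * (real a + 1/3) + 1)\<^sup>2"
    unfolding one_minus_golden_inv by (simp add: power_mult power_add)
  finally show ?thesis .
qed

definition golden_gap :: real where
  "golden_gap = golden_inv * (1 - golden_inv) ^ 4"

lemma golden_gap_pos: "0 < golden_gap"
  using golden_inv_pos golden_inv_less_1 by (simp add: golden_gap_def)

lemma golden_gap_le:
  assumes "v = golden_inv \<or> v = 1 - golden_inv"
  shows "golden_gap \<le> v * (1 - v) * min (v ^ 3) ((1 - v) ^ 2)"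
proof -
  let ?g = golden_inv
  have g: "1 - ?g < ?g" "0 < 1 - ?g" "1 - ?g < 1" using golden_inv_bounds by auto
  have "(1 - ?g) ^ 3 \<le> (1 - ?g) ^ 2" by (rule power_decreasing) (use g in auto)
  moreover have "(1 - ?g) ^ 3 \<le> ?g ^ 3" by (rule power_mono) (use g in auto)
  moreover have "(1 - ?g) ^ 3 \<le> ?g ^ 2"
    using power_decreasing[of 1 3 "1 - ?g"] g by (simp flip: one_minus_golden_inv)
  ultimately have cube: "(1 - ?g) ^ 3 \<le> min (v ^ 3) ((1 - v) ^ 2)" using assms by auto
  have "golden_gap = ?g * (1 - ?g) * (1 - ?g) ^ 3"
    by (simp add: golden_gap_def numeral_eq_Suc mult.assoc)
  also have "\<dots> \<le> ?g * (1 - ?g) * min (v ^ 3) ((1 - v) ^ 2)"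
    using cube g golden_inv_pos by (intro mult_left_mono) auto
  also have "?g * (1 - ?g) = v * (1 - v)" using assms by auto
  finally show ?thesis .
qed

lemma mono_on_slope_eq_abs:
  fixes f :: "real \<Rightarrow> real"
  assumes "mono_on {0..1} f" "x \<in> {0..1}" "y \<in> {0..1}" "y \<noteq> x"
  shows "(f y - f x) / (y - x) = \<bar>f y - f x\<bar> / \<bar>y - x\<bar>"
proof (cases "y < x")
  case True
  then have "f y \<le> f x" using assms by (auto intro: mono_onD)
  then have "\<bar>f y - f x\<bar> = f x - f y" "\<bar>y - x\<bar> = x - y" using True by auto
  then show ?thesis using minus_divide_divide[of "f x - f y" "x - y"] by simp
next
  case False
  then have "x < y" using assms by simp
  then have "f x \<le> f y" using assms by (auto intro: mono_onD)
  with \<open>x < y\<close> show ?thesis by simp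
qed

definition cylinder_ratio :: "real \<Rightarrow> real \<Rightarrow> nat \<Rightarrow> real" where
  "cylinder_ratio v x k = cylinder_scale v x k * (cf_den (cf_digits x) k)\<^sup>2"

locale bounded_digits = irrational_unit +
  assumes digit_le_2: "cf_pq x n \<le> 2"
begin

lemma digit_cases: "cf_pq x k \<in> {1, 2}"
  using digit_ge_1[of k] digit_le_2[of k] by auto

lemma tail_bounds_bounded_digits: "1/3 < (gauss_map ^^ k) x" "(gauss_map ^^ k) x < 3/4"
proof -
  have lo: "1/3 < (gauss_map ^^ j) x" for j
  proof -
    have "cf_digits x j + (gauss_map ^^ Suc j) x < 3"
      using digit_le_2[of j] tail_bounds[of "Suc j"] by linarith
    then show ?thesis using tail_bounds[of "Suc j"] digit_ge_1[of j]
      by (subst tail_eq) (simp add: field_simps)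
  qed
  show "1/3 < (gauss_map ^^ k) x" by (rule lo)
  have "4/3 < cf_digits x k + (gauss_map ^^ Suc k) x"
    using digit_cases[of k] lo[of "Suc k"] tail_bounds[of "Suc k"] by auto
  then show "(gauss_map ^^ k) x < 3/4" by (subst tail_eq) (simp add: field_simps)
qed

lemma cf_den_le_3_prev: "cf_den (cf_digits x) (Suc j) \<le> 3 * cf_den_prev (cf_digits x) (Suc j)"
proof -
  have "cf_digits x j * cf_den (cf_digits x) j \<le> 2 * cf_den (cf_digits x) j"
    using digit_le_2[of j] cf_den_bounds[of "cf_digits x", OF digit_ge_1, of j]
    by (intro mult_right_mono) auto
  then show ?thesis
    unfolding cf_recurrence_Suc using cf_den_bounds[of "cf_digits x", OF digit_ge_1, of j] by linarith
qed

lemma cylinder_ratio_Suc: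
  "golden_inv * (1 - golden_inv) * cylinder_ratio golden_inv x k \<le> cylinder_ratio golden_inv x (Suc k)"
proof -
  let ?w = "alt_param golden_inv k" and ?q = "cf_den (cf_digits x)"
  have w: "0 < ?w" "?w < 1" using alt_param_bounds golden_inv_pos golden_inv_less_1 by auto
  have "golden_inv * (1 - golden_inv) = ?w * (1 - ?w)" by (simp add: alt_param_def algebra_simps)
  also have "\<dots> \<le> ?w ^ (cf_pq x k - 1) * (1 - ?w)"
    using digit_cases[of k] w by (intro mult_right_mono) auto
  finally have factor: "golden_inv * (1 - golden_inv) \<le> ?w ^ (cf_pq x k - 1) * (1 - ?w)" .
  have "(?q k)\<^sup>2 \<le> (?q (Suc k))\<^sup>2"
    using cf_den_mono[of "cf_digits x", OF digit_ge_1, of k] cf_den_bounds[of "cf_digits x", OF digit_ge_1, of k]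
    by (intro power_mono) auto
  then have "golden_inv * (1 - golden_inv) * (?q k)\<^sup>2 \<le> ?w ^ (cf_pq x k - 1) * (1 - ?w) * (?q (Suc k))\<^sup>2"
    by (rule mult_mono[OF factor]) (use w in auto)
  moreover have "0 < cylinder_scale golden_inv x k"
    using cylinder_scale_pos golden_inv_pos golden_inv_less_1 by auto
  ultimately have "cylinder_scale golden_inv x k * (golden_inv * (1 - golden_inv) * (?q k)\<^sup>2) \<le>
      cylinder_scale golden_inv x k * (?w ^ (cf_pq x k - 1) * (1 - ?w) * (?q (Suc k))\<^sup>2)"
    by (intro mult_left_mono) auto
  then show ?thesis unfolding cylinder_ratio_def cylinder_scale_Suc by (simp add: ac_simps)
qed

text \<open>Over two consecutive levels starting at an even one, the scale factor is
  \<open>\<phi>\<^sup>-\<^sup>a (1 - \<phi>\<^sup>-\<^sup>1)\<^sup>b\<close> while the denominator grows by at least \<open>b (a + 1/3) + 1\<close>.\<close>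

lemma cylinder_ratio_two_steps:
  assumes k: "even k" "1 \<le> k"
  shows "6/5 * cylinder_ratio golden_inv x k \<le> cylinder_ratio golden_inv x (Suc (Suc k))"
proof -
  let ?a = "cf_pq x k" and ?b = "cf_pq x (Suc k)" and ?g = golden_inv
  let ?q = "cf_den (cf_digits x) k" and ?q' = "cf_den_prev (cf_digits x) k"
  have a: "?a \<in> {1, 2}" and b: "?b \<in> {1, 2}" using digit_cases by auto
  have scale: "cylinder_scale ?g x (Suc (Suc k)) = cylinder_scale ?g x k * (?g ^ ?a * (1 - ?g) ^ ?b)"
  proof -
    have "?g ^ (?a - 1) * (1 - ?g) * ((1 - ?g) ^ (?b - 1) * ?g) = ?g ^ ?a * (1 - ?g) ^ ?b"
      using a b by (auto simp: power2_eq_square)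
    then show ?thesis using k(1) by (simp add: cylinder_scale_Suc alt_param_def mult.assoc)
  qed
  define K where "K = real ?b * (real ?a + 1/3) + 1"
  have q: "1 \<le> ?q" "0 \<le> ?q'" using cf_den_bounds[of "cf_digits x", OF digit_ge_1, of k] by auto
  obtain j where "k = Suc j" using k by (cases k) auto
  then have "?q \<le> 3 * ?q'" using cf_den_le_3_prev by simp
  then have "K * ?q \<le> cf_den (cf_digits x) (Suc (Suc k))"
    using mult_left_mono[of "?q / 3" ?q' "real ?b"] by (simp add: K_def algebra_simps)
  then have growth: "(K * ?q)\<^sup>2 \<le> (cf_den (cf_digits x) (Suc (Suc k)))\<^sup>2"
    using q by (intro power_mono) (auto simp: K_def)
  have s: "0 < cylinder_scale ?g x k" using cylinder_scale_pos golden_inv_pos golden_inv_less_1 by auto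
  have "6/5 * cylinder_ratio ?g x k \<le> ?g ^ ?a * (1 - ?g) ^ ?b * K\<^sup>2 * cylinder_ratio ?g x k"
    using golden_inv_power_bound[OF a b] s by (intro mult_right_mono) (auto simp: K_def cylinder_ratio_def)
  also have "\<dots> = cylinder_scale ?g x k * (?g ^ ?a * (1 - ?g) ^ ?b) * (K * ?q)\<^sup>2"
    by (simp add: cylinder_ratio_def power_mult_distrib)
  also have "\<dots> \<le> cylinder_ratio ?g x (Suc (Suc k))"
    unfolding cylinder_ratio_def scale using growth s golden_inv_pos golden_inv_less_1
    by (intro mult_left_mono) auto
  finally show ?thesis .
qed

lemma cylinder_ratio_geometric:
  assumes "2 \<le> k"
  shows "golden_inv * (1 - golden_inv) * cylinder_ratio golden_inv x 2 * (6/5) ^ ((k - 2) div 2)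
    \<le> cylinder_ratio golden_inv x k"
proof -
  let ?R = "cylinder_ratio golden_inv x" and ?j = "(k - 2) div 2"
  have g: "0 < golden_inv * (1 - golden_inv)" "golden_inv * (1 - golden_inv) \<le> 1"
    using golden_inv_pos golden_inv_less_1 by (auto simp: mult_le_one)
  have R: "0 < ?R i" for i
    using cylinder_scale_pos golden_inv_pos golden_inv_less_1
      cf_den_bounds[of "cf_digits x", OF digit_ge_1, of i]
    by (simp add: cylinder_ratio_def)
  have even: "(6/5) ^ j * ?R 2 \<le> ?R (2 + 2 * j)" for j
  proof (induction j)
    case (Suc j)
    have "6/5 * ?R (2 + 2 * j) \<le> ?R (Suc (Suc (2 + 2 * j)))" by (rule cylinder_ratio_two_steps) auto
    then show ?case using Suc by simp
  qed simp
  have "golden_inv * (1 - golden_inv) * ?R 2 * (6/5) ^ ?j = golden_inv * (1 - golden_inv) * ((6/5) ^ ?j * ?R 2)"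
    by simp
  also have "\<dots> \<le> golden_inv * (1 - golden_inv) * ?R (2 + 2 * ?j)"
    using even[of ?j] g by (intro mult_left_mono) auto
  finally have "golden_inv * (1 - golden_inv) * ?R 2 * (6/5) ^ ?j
      \<le> golden_inv * (1 - golden_inv) * ?R (2 + 2 * ?j)" .
  moreover have "golden_inv * (1 - golden_inv) * ?R (2 + 2 * ?j) \<le> ?R (2 + 2 * ?j)"
    using g R by (simp add: mult_left_le_one_le)
  moreover have "k = 2 + 2 * ?j \<or> k = Suc (2 + 2 * ?j)" using assms by auto
  ultimately show ?thesis using cylinder_ratio_Suc[of "2 + 2 * ?j"] by auto
qed

lemma cylinder_ratio_tendsto: "filterlim (cylinder_ratio golden_inv x) at_top sequentially"
  unfolding filterlim_at_top eventually_sequentially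
proof
  fix Z :: real
  define c where "c = golden_inv * (1 - golden_inv) * cylinder_ratio golden_inv x 2"
  have "0 < c"
    using golden_inv_pos golden_inv_less_1 cylinder_scale_pos cf_den_bounds[of "cf_digits x", OF digit_ge_1, of 2]
    by (simp add: c_def cylinder_ratio_def)
  obtain j0 where "Z / c < (6/5) ^ j0" using real_arch_pow[of "6/5" "Z / c"] by auto
  then have "Z < c * (6/5) ^ j0" using \<open>0 < c\<close> by (simp add: divide_less_eq mult.commute)
  have "Z \<le> cylinder_ratio golden_inv x k" if "2 + 2 * j0 \<le> k" for k
  proof -
    have "c * (6/5) ^ j0 \<le> c * (6/5) ^ ((k - 2) div 2)"
      using \<open>0 < c\<close> that by (intro mult_left_mono power_increasing) auto
    with \<open>Z < c * (6/5) ^ j0\<close> cylinder_ratio_geometric[of k] that show ?thesis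
      by (simp add: c_def)
  qed
  then show "\<exists>N. \<forall>k\<ge>N. Z \<le> cylinder_ratio golden_inv x k" by blast
qed

lemma dtu_increment_lower_bound:
  assumes "y \<in> cylinder x k" "y \<notin> cylinder x (Suc k)"
  shows "golden_gap * cylinder_scale golden_inv x k \<le> \<bar>dtu golden_inv y - dtu golden_inv x\<bar>"
proof -
  obtain z where z: "z \<in> {0..1}" "y = cf_prefix (cf_digits x) k z"
    and outside: "z < 1 / (cf_digits x k + 1) \<or> 1 / cf_digits x k < z"
    using cylinder_diff_Suc[OF assms] .
  let ?w = "alt_param golden_inv k" and ?t = "(gauss_map ^^ Suc k) x"
  obtain A S where S: "\<bar>S\<bar> = cylinder_scale golden_inv x k"
    and AS: "\<And>u. u \<in> {0..1} \<Longrightarrow> dtu golden_inv (cf_prefix (cf_digits x) k u) = A + S * dtu ?w u"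
    using dtu_on_cylinder golden_inv_pos golden_inv_less_1 by blast
  have "golden_gap \<le> ?w * (1 - ?w) * min (?w ^ 3) ((1 - ?w) ^ 2)"
    by (rule golden_gap_le) (simp add: alt_param_def)
  also have "\<dots> \<le> \<bar>dtu ?w z - dtu ?w (1 / (cf_digits x k + ?t))\<bar>"
    using dtu_gap_outside_digit_interval[of ?w "cf_pq x k" ?t z] alt_param_bounds
      golden_inv_pos golden_inv_less_1 digit_cases tail_bounds_bounded_digits[of "Suc k"] z(1) outside
    by auto
  also have "1 / (cf_digits x k + ?t) = (gauss_map ^^ k) x" by (rule tail_eq[symmetric])
  finally have gap: "golden_gap \<le> \<bar>dtu ?w z - dtu ?w ((gauss_map ^^ k) x)\<bar>" .
  have "dtu golden_inv y - dtu golden_inv x = S * (dtu ?w z - dtu ?w ((gauss_map ^^ k) x))"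
    using AS[OF z(1)] AS[OF tail_in_unit[of k]] z(2) cf_prefix_tail[of k] by (simp add: algebra_simps)
  then show ?thesis
    using gap S cylinder_scale_pos golden_inv_pos golden_inv_less_1
    by (simp add: abs_mult mult.commute mult_right_mono)
qed

lemma dtu_slope_lower_bound:
  assumes k: "y \<in> cylinder x k" "y \<notin> cylinder x (Suc k)"
  shows "golden_gap * cylinder_ratio golden_inv x k \<le> (dtu golden_inv y - dtu golden_inv x) / (y - x)"
proof -
  let ?g = golden_inv and ?q = "cf_den (cf_digits x)"
  have y: "y \<noteq> x" using k(2) mem_cylinder by blast
  have q: "1 \<le> ?q k" using cf_den_bounds[of "cf_digits x", OF digit_ge_1, of k] by simp
  have dist: "\<bar>y - x\<bar> * (?q k)\<^sup>2 \<le> 1"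
    using cylinder_dist[OF k(1)] q by (simp add: field_simps)
  have "golden_gap * cylinder_ratio ?g x k = golden_gap * cylinder_scale ?g x k * (?q k)\<^sup>2"
    by (simp add: cylinder_ratio_def mult.assoc)
  also have "\<dots> \<le> \<bar>dtu ?g y - dtu ?g x\<bar> * (?q k)\<^sup>2"
    using dtu_increment_lower_bound[OF k] by (intro mult_right_mono) auto
  also have "\<dots> \<le> \<bar>dtu ?g y - dtu ?g x\<bar> / \<bar>y - x\<bar>"
  proof -
    have "\<bar>dtu ?g y - dtu ?g x\<bar> * ((?q k)\<^sup>2 * \<bar>y - x\<bar>) \<le> \<bar>dtu ?g y - dtu ?g x\<bar> * 1"
      using dist by (intro mult_left_mono) (auto simp: mult.commute)
    then show ?thesis using y by (simp add: le_divide_eq mult.assoc)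
  qed
  also have "\<dots> = (dtu ?g y - dtu ?g x) / (y - x)"
  proof -
    have "mono_on {0..1} (dtu ?g)"
      using unit_cdf_dtu[OF golden_inv_pos golden_inv_less_1] by (simp add: unit_cdf_def)
    moreover have "x \<in> {0..1}" using pos less_one by simp
    moreover have "y \<in> {0..1}" using k(1) cylinder_subset[of k] by blast
    ultimately show ?thesis using mono_on_slope_eq_abs y by metis
  qed
  finally show ?thesis .
qed

lemma dtu_slope_at_top: "filterlim (\<lambda>y. (dtu golden_inv y - dtu golden_inv x) / (y - x)) at_top (at x)"
  unfolding filterlim_at_top
proof
  fix Z :: real
  obtain K where K: "\<And>k. K \<le> k \<Longrightarrow> Z \<le> golden_gap * cylinder_ratio golden_inv x k"
    using cylinder_ratio_tendsto golden_gap_pos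
    unfolding filterlim_at_top eventually_sequentially
    by (metis pos_divide_le_eq mult.commute)
  obtain e where e: "0 < e" "\<And>y. \<bar>y - x\<bar> < e \<Longrightarrow> y \<in> cylinder x K"
    using cylinder_nhd by blast
  have "Z \<le> (dtu golden_inv y - dtu golden_inv x) / (y - x)" if y: "y \<noteq> x" "\<bar>y - x\<bar> < e" for y
  proof -
    obtain k where k: "K \<le> k" "y \<in> cylinder x k" "y \<notin> cylinder x (Suc k)"
      using cylinder_exit[OF e(2)[OF y(2)] y(1)] by blast
    show ?thesis using K[OF k(1)] dtu_slope_lower_bound[OF k(2,3)] by linarith
  qed
  then show "\<forall>\<^sub>F y in at x. Z \<le> (dtu golden_inv y - dtu golden_inv x) / (y - x)"
    unfolding eventually_at using e(1) by (auto simp: dist_real_def)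
qed

end

text \<open>\<open>[0; 1, 3 + u] = (3 + u) / (4 + u)\<close>.\<close>

definition cf_13 :: "real \<Rightarrow> real" where
  "cf_13 u = (3 + u) / (4 + u)"

lemma dtu_cf_13:
  assumes v: "0 < v" "v < 1" and u: "u \<in> {0..1}"
  shows "dtu v (cf_13 u) = 1 - (1 - v) ^ 3 + (1 - v) ^ 3 * v * dtu v u"
proof -
  have v': "0 < 1 - v" "1 - v < 1" using v by auto
  have "cf_13 u = 1 / (real 1 + 1 / (real 3 + u))" using u by (simp add: cf_13_def field_simps)
  then have "dtu v (cf_13 u) = 1 - (1 - v) * dtu (1 - v) (1 / (real 3 + u))"
    using dtu_inverse_branch[OF v, of 1 "1 / (real 3 + u)"] u by simp
  also have "dtu (1 - v) (1 / (real 3 + u)) = (1 - v) ^ 2 - (1 - v) ^ 2 * v * dtu v u"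
    using dtu_inverse_branch[OF v', of 3 u] u by simp
  finally show ?thesis by (simp add: algebra_simps power2_eq_square power3_eq_cube)
qed

text \<open>The fixed point of \<open>cf_13\<close>, i.e. \<open>[0; 1, 3, 1, 3, \<dots>]\<close>.\<close>

definition y_13 :: real where
  "y_13 = (sqrt 21 - 3) / 2"

lemma y_13_bounds: "79/100 < y_13" "y_13 < 159/200"
proof -
  have "4.58 < sqrt 21" "sqrt 21 < 4.59"
    by (rule real_less_rsqrt; simp add: power2_eq_square)
       (rule real_less_lsqrt; simp add: power2_eq_square)
  then show "79/100 < y_13" "y_13 < 159/200" unfolding y_13_def by auto
qed

lemma y_13_quadratic: "y_13 * y_13 + 3 * y_13 - 3 = 0"
proof -
  have "(sqrt 21)\<^sup>2 = 21" by simp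
  then show ?thesis unfolding y_13_def by (simp add: field_simps power2_eq_square)
qed

lemma cf_13_y_13: "cf_13 y_13 = y_13"
  using y_13_quadratic y_13_bounds by (simp add: cf_13_def field_simps)

lemma y_13_irrational: "y_13 \<notin> \<rat>"
proof
  assume "y_13 \<in> \<rat>"
  then obtain a b :: int where b: "0 < b" and cop: "coprime a b" and ab: "y_13 = of_int a / of_int b"
    by (rule Rats_cases') auto
  have "real_of_int a * real_of_int a + 3 * real_of_int a * real_of_int b - 3 * real_of_int b * real_of_int b = 0"
    using y_13_quadratic b unfolding ab by (simp add: field_simps)
  then have "real_of_int (a * a + 3 * a * b - 3 * b * b) = 0" by simp
  then have "a * a = b * (3 * b - 3 * a)" by (simp only: of_int_eq_0_iff) (simp add: algebra_simps)
  then have "b dvd a" using cop by (metis coprime_commute coprime_dvd_mult_left_iff dvd_triv_left)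
  then have "is_unit b" using cop by (metis coprime_common_divisor dvd_refl)
  then have "b = 1" using b by simp
  then have "0 < a" "a < 1" using y_13_bounds ab by simp_all
  then show False by simp
qed

lemma cf_pq_y_13: "cf_pq y_13 n \<le> 3"
proof -
  define z where "z = 1 / (3 + y_13)"
  have z: "0 < z" "z < 1" using y_13_bounds by (auto simp: z_def)
  have inv_y: "1 / y_13 = 1 + z"
    using y_13_quadratic y_13_bounds by (simp add: z_def field_simps)
  have "gauss_map y_13 = z" "gauss_map z = y_13"
    using z y_13_bounds by (simp_all add: gauss_map_def inv_y z_def frac_def floor_eq_iff)
  then have "(gauss_map ^^ n) y_13 = (if even n then y_13 else z)"
    by (induction n) auto
  moreover have "\<lfloor>1 / y_13\<rfloor> = 1" "\<lfloor>1 / z\<rfloor> = 3"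
    using z y_13_bounds by (simp_all add: inv_y z_def floor_eq_iff)
  ultimately show ?thesis by (simp add: cf_pq_def)
qed

definition slope_13 :: "real \<Rightarrow> real" where
  "slope_13 u = \<bar>dtu golden_inv u - dtu golden_inv y_13\<bar> / \<bar>u - y_13\<bar>"

definition ratio_13 :: real where
  "ratio_13 = (1 - golden_inv) ^ 3 * golden_inv"

lemma ratio_13_bounds: "0 < ratio_13" "25 * ratio_13 < 1"
proof -
  show "0 < ratio_13" using golden_inv_pos golden_inv_less_1 by (simp add: ratio_13_def)
  have "ratio_13 = golden_inv ^ 7" unfolding ratio_13_def one_minus_golden_inv
    by (simp add: eval_nat_numeral)
  also have "\<dots> < 0.61805 ^ 7" using golden_inv_bounds by (intro power_strict_mono) auto
  finally show "25 * ratio_13 < 1" by (simp add: eval_nat_numeral)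
qed

lemma cf_13_preimage_near_y_13:
  assumes "\<bar>u - y_13\<bar> < 1/200"
  obtains w D where "w \<in> {0..1}" "u = cf_13 w" "w - y_13 = D * (u - y_13)" "16 \<le> D" "D \<le> 25"
proof -
  have ub: "3/4 < u" "u < 4/5" using assms[unfolded abs_diff_less_iff] y_13_bounds by linarith+
  define w where "w = (4 * u - 3) / (1 - u)"
  have w: "w \<in> {0..1}" using ub by (auto simp: w_def field_simps)
  have u_eq: "u = cf_13 w" using ub by (simp add: w_def cf_13_def field_simps)
  define D where "D = (4 + w) * (4 + y_13)"
  have D: "16 \<le> D" "D \<le> 25"
    using w y_13_bounds mult_mono[of 4 "4 + w" 4 "4 + y_13"] mult_mono[of "4 + w" 5 "4 + y_13" 5]
    by (auto simp: D_def)
  have "u - y_13 = cf_13 w - cf_13 y_13" using u_eq cf_13_y_13 by simp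
  also have "\<dots> = (w - y_13) / D"
    using w y_13_bounds unfolding D_def cf_13_def by (simp add: field_simps)
  finally have "w - y_13 = D * (u - y_13)" using D by (simp add: field_simps)
  then show ?thesis using that w u_eq D by blast
qed

lemma slope_13_step:
  assumes u: "u \<noteq> y_13" "\<bar>u - y_13\<bar> < 1/200"
  obtains w where "w \<in> {0..1}" "w \<noteq> y_13" "16 * \<bar>u - y_13\<bar> \<le> \<bar>w - y_13\<bar>"
    "\<bar>w - y_13\<bar> \<le> 25 * \<bar>u - y_13\<bar>" "slope_13 u \<le> 25 * ratio_13 * slope_13 w"
proof -
  obtain w D where w: "w \<in> {0..1}" "u = cf_13 w" "w - y_13 = D * (u - y_13)" and D: "16 \<le> D" "D \<le> 25"
    using cf_13_preimage_near_y_13[OF u(2)] .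
  have dist: "\<bar>w - y_13\<bar> = D * \<bar>u - y_13\<bar>" using w(3) D by (simp add: abs_mult)
  then have "w \<noteq> y_13" using u D by auto
  let ?g = "dtu golden_inv"
  have "?g u = 1 - (1 - golden_inv) ^ 3 + ratio_13 * ?g w"
    using dtu_cf_13[OF golden_inv_pos golden_inv_less_1 w(1)] unfolding w(2) ratio_13_def .
  moreover have "?g y_13 = 1 - (1 - golden_inv) ^ 3 + ratio_13 * ?g y_13"
    using dtu_cf_13[OF golden_inv_pos golden_inv_less_1, of y_13] y_13_bounds
    unfolding cf_13_y_13 ratio_13_def by simp
  ultimately have "?g u - ?g y_13 = ratio_13 * (?g w - ?g y_13)"
    unfolding right_diff_distrib by linarith
  then have "slope_13 u = ratio_13 * \<bar>?g w - ?g y_13\<bar> / (\<bar>w - y_13\<bar> / D)"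
    using ratio_13_bounds dist D by (simp add: slope_13_def abs_mult)
  also have "\<dots> = ratio_13 * D * slope_13 w"
    using D by (simp add: slope_13_def)
  also have "\<dots> \<le> 25 * ratio_13 * slope_13 w"
    using D ratio_13_bounds by (intro mult_right_mono) (auto simp: slope_13_def)
  finally show ?thesis
    using that w(1) \<open>w \<noteq> y_13\<close> dist D by (simp add: mult_right_mono)
qed

lemma slope_13_nonneg: "0 \<le> slope_13 u"
  by (simp add: slope_13_def)

lemma slope_13_far:
  assumes "u \<in> {0..1}" "1/200 \<le> \<bar>u - y_13\<bar>"
  shows "slope_13 u \<le> 200"
proof -
  have "y_13 \<in> {0..1}" using y_13_bounds by simp
  then have "dtu golden_inv u \<in> {0..1}" "dtu golden_inv y_13 \<in> {0..1}"
    using dtu_range[OF golden_inv_pos golden_inv_less_1] assms(1) by auto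
  then have "\<bar>dtu golden_inv u - dtu golden_inv y_13\<bar> \<le> 1" by auto
  then have "slope_13 u \<le> 1 / (1/200)"
    unfolding slope_13_def using assms(2) by (intro frac_le) auto
  then show ?thesis by simp
qed

lemma slope_13_bounded:
  assumes "u \<in> {0..1}" "u \<noteq> y_13"
  shows "slope_13 u \<le> 200"
proof -
  obtain n where "200 / \<bar>u - y_13\<bar> < 16 ^ n" using real_arch_pow[of 16] by auto
  then have "(1/200) / 16 ^ n \<le> \<bar>u - y_13\<bar>" using assms by (simp add: field_simps)
  then show ?thesis using assms
  proof (induction n arbitrary: u)
    case (Suc n)
    show ?case
    proof (cases "1/200 \<le> \<bar>u - y_13\<bar>")
      case False
      then have "\<bar>u - y_13\<bar> < 1/200" by simp
      then obtain w where w: "w \<in> {0..1}" "w \<noteq> y_13" "16 * \<bar>u - y_13\<bar> \<le> \<bar>w - y_13\<bar>"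
        "\<bar>w - y_13\<bar> \<le> 25 * \<bar>u - y_13\<bar>" "slope_13 u \<le> 25 * ratio_13 * slope_13 w"
        by (rule slope_13_step[OF Suc.prems(3)])
      have "(1/200) / 16 ^ n \<le> \<bar>w - y_13\<bar>" using Suc.prems(1) w(3) by simp
      then have "slope_13 w \<le> 200" using Suc.IH w(1,2) by blast
      moreover have "25 * ratio_13 * slope_13 w \<le> slope_13 w"
        using ratio_13_bounds slope_13_nonneg by (intro mult_left_le_one_le) auto
      ultimately show ?thesis using w(5) by linarith
    qed (use slope_13_far Suc.prems in auto)
  qed (use slope_13_far in auto)
qed

lemma slope_13_decay:
  assumes "u \<in> {0..1}" "u \<noteq> y_13" "\<bar>u - y_13\<bar> < (1/200) / 25 ^ m"
  shows "slope_13 u \<le> (25 * ratio_13) ^ m * 200"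
  using assms
proof (induction m arbitrary: u)
  case 0
  then show ?case using slope_13_bounded by simp
next
  case (Suc m)
  have "(1/200) / 25 ^ Suc m \<le> (1/200 :: real) / 1" by (intro divide_left_mono one_le_power) auto
  then have "\<bar>u - y_13\<bar> < 1/200" using Suc.prems(3) by linarith
  then obtain w where w: "w \<in> {0..1}" "w \<noteq> y_13" "16 * \<bar>u - y_13\<bar> \<le> \<bar>w - y_13\<bar>"
    "\<bar>w - y_13\<bar> \<le> 25 * \<bar>u - y_13\<bar>" "slope_13 u \<le> 25 * ratio_13 * slope_13 w"
    by (rule slope_13_step[OF Suc.prems(2)])
  have "\<bar>w - y_13\<bar> < (1/200) / 25 ^ m" using w(4) Suc.prems(3) by simp
  then have "slope_13 w \<le> (25 * ratio_13) ^ m * 200" using Suc.IH[OF w(1,2)] by blast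
  then have "25 * ratio_13 * slope_13 w \<le> 25 * ratio_13 * ((25 * ratio_13) ^ m * 200)"
    using ratio_13_bounds by (intro mult_left_mono) auto
  then have "slope_13 u \<le> 25 * ratio_13 * ((25 * ratio_13) ^ m * 200)" using w(5) by linarith
  then show ?case by (simp only: power_Suc mult.assoc)
qed

theorem dtu_golden_has_derivative_0: "(dtu golden_inv has_real_derivative 0) (at y_13)"
  unfolding has_field_derivative_iff
proof (rule LIM_I)
  fix r :: real assume r: "0 < r"
  obtain m where m: "(25 * ratio_13) ^ m < r / 200"
    using real_arch_pow_inv[of "r / 200" "25 * ratio_13"] r ratio_13_bounds by auto
  have "\<bar>(dtu golden_inv u - dtu golden_inv y_13) / (u - y_13)\<bar> < r"
    if "u \<noteq> y_13" "\<bar>u - y_13\<bar> < (1/200) / 25 ^ m" for u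
  proof -
    have "(1/200) / 25 ^ m \<le> (1/200 :: real) / 1" by (intro divide_left_mono one_le_power) auto
    then have "\<bar>u - y_13\<bar> < 1/200" using that(2) by linarith
    then have "u \<in> {0..1}" using y_13_bounds unfolding abs_diff_less_iff by simp
    then have "slope_13 u \<le> (25 * ratio_13) ^ m * 200" using slope_13_decay that by blast
    with m show ?thesis by (simp add: slope_13_def abs_divide)
  qed
  then show "\<exists>s>0. \<forall>u. u \<noteq> y_13 \<and> norm (u - y_13) < s \<longrightarrow>
      norm ((dtu golden_inv u - dtu golden_inv y_13) / (u - y_13) - 0) < r"
    by (intro exI[of _ "(1/200) / 25 ^ m"]) auto
qed

theorem theorem3:
  fixes \<phi> :: real
  defines "\<phi> \<equiv> (1 + sqrt 5) / 2"
  shows "(\<forall>x. 0 < x \<and> x < 1 \<and> x \<notin> \<rat> \<and> (\<forall>n. cf_pq x n \<le> 2) \<longrightarrow>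
            filterlim (\<lambda>y. (dtu (1 / \<phi>) y - dtu (1 / \<phi>) x) / (y - x)) at_top (at x))
       \<and> (\<exists>y. 0 < y \<and> y < 1 \<and> y \<notin> \<rat> \<and> (\<forall>n. cf_pq y n \<le> 3) \<and>
            (dtu (1 / \<phi>) has_real_derivative 0) (at y))"
proof -
  have golden: "1 / \<phi> = golden_inv" unfolding \<phi>_def golden_inv_def ..
  have "filterlim (\<lambda>y. (dtu golden_inv y - dtu golden_inv x) / (y - x)) at_top (at x)"
    if "0 < x \<and> x < 1 \<and> x \<notin> \<rat> \<and> (\<forall>n. cf_pq x n \<le> 2)" for x
  proof -
    interpret bounded_digits x using that by unfold_locales auto
    show ?thesis by (rule dtu_slope_at_top)
  qed
  moreover have "0 < y_13 \<and> y_13 < 1 \<and> y_13 \<notin> \<rat> \<and> (\<forall>n. cf_pq y_13 n \<le> 3) \<and>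
      (dtu golden_inv has_real_derivative 0) (at y_13)"
    using y_13_bounds y_13_irrational cf_pq_y_13 dtu_golden_has_derivative_0 by auto
  ultimately show ?thesis unfolding golden by blast
qed

end
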